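(* Let $W\sim\mathcal{N}_d(0,I)$ and let $f:\mathbb{R}^d\to\mathbb{R}$ be differentiable. Let $\Psi(L)=\mathbb{P}(\|\nabla f(W)\|_2^2>L)$ for $L\ge0$, and define for $L,\alpha,t>0$ \[ \Delta(L,\alpha,t)=e^{\alpha^2\pi^2L/4-\alpha t}+\Big(\Psi(L)+\frac{\pi\alpha}{2}\sqrt{\Psi(L)\,\mathbb{E}(\|\nabla f(W)\|_2^2)}\Big). \] Then for all $\alpha>0$ and $t>0$, \[ \mathbb{E}\big\{\exp(\alpha\{f(W)-\mathbb{E}f(W)\})\wedge e^{\alpha t}\big\}\le e^{\alpha t}\inf_{L>0}\Delta(L,\alpha,t), \] and \[ \mathbb{P}(|f(W)-\mathbb{E}f(W)|>t)\le2\inf_{\alpha,L>0}\Delta(L,\alpha,t). \] In particular, for all $L>0$ and $t>0$, \[ \mathbb{P}(|f(W)-\mathbb{E}f(W)|>t)\le2\exp\Big(-\frac{t^2}{\pi^2L}\Big)+2(1+L^{-1/2})\big\{L^{-1}\mathbb{E}(\|\nabla f(W)\|_2^2)\,\Psi(L)\big\}^{1/2}. \]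
   Context: $a\wedge b=\min(a,b)$. *)

theory Defs
  imports "HOL-Analysis.Analysis"
begin

definition std_gauss :: "'a::euclidean_space measure" where
  "std_gauss = density lborel
     (\<lambda>x. ennreal ((2 * pi) powr (- real DIM('a) / 2) * exp (- (norm x)\<^sup>2 / 2)))"

definition grad :: "('a::euclidean_space \<Rightarrow> real) \<Rightarrow> 'a \<Rightarrow> 'a" where
  "grad f x = (\<Sum>i\<in>Basis. frechet_derivative f (at x) i *\<^sub>R i)"

definition Psi :: "('a::euclidean_space \<Rightarrow> real) \<Rightarrow> real \<Rightarrow> real" where
  "Psi f L = measure std_gauss {x. (norm (grad f x))\<^sup>2 > L}"

definition Delta :: "('a::euclidean_space \<Rightarrow> real) \<Rightarrow> real \<Rightarrow> real \<Rightarrow> real \<Rightarrow> real" where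
  "Delta f L \<alpha> t = exp (\<alpha>\<^sup>2 * pi\<^sup>2 * L / 4 - \<alpha> * t)
     + (Psi f L + pi * \<alpha> / 2 *
          sqrt (Psi f L * (\<integral>x. (norm (grad f x))\<^sup>2 \<partial>std_gauss)))"

end

theory Submission
  imports Defs "HOL-Probability.Probability"
begin

text \<open>
  Maurey--Pisier interpolation with a truncated gradient. For independent standard Gaussian
  vectors \<open>x\<close>, \<open>y\<close> the path \<open>x\<^sub>\<theta> = sin \<theta> x + cos \<theta> y\<close> runs from \<open>y\<close> to \<open>x\<close>, so \<open>f x - f y\<close>
  is the integral of \<open>\<nabla>f(x\<^sub>\<theta>) \<bullet> x\<^sub>\<theta>'\<close> over \<open>[0, \<pi>/2]\<close>, and for every \<open>\<theta>\<close> the pair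
  \<open>(x\<^sub>\<theta>, x\<^sub>\<theta>')\<close> is again a pair of independent standard Gaussians. Split \<open>\<nabla>f = g + h\<close>,
  where \<open>g\<close> is \<open>\<nabla>f\<close> on the set \<open>|\<nabla>f|\<^sup>2 \<le> L\<close>. Jensen's inequality in \<open>\<theta>\<close>, rotation
  invariance and the Gaussian moment generating function bound the exponential moment of the
  \<open>g\<close>-part of the integral by \<open>exp (\<alpha>\<^sup>2 \<pi>\<^sup>2 L / 8)\<close>, while the \<open>h\<close>-part has first moment at
  most \<open>\<pi>/2 E|h| \<le> \<pi>/2 sqrt (\<Psi>(L) E|\<nabla>f|\<^sup>2)\<close> by Cauchy--Schwarz. Averaging out \<open>y\<close> by
  Jensen's inequality and splitting
  \<open>min 1 (exp (\<alpha> (a + b - t))) \<le> exp (\<alpha> (a + s - t)) + |b| / (s + 1/\<alpha>)\<close>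
  gives a Chernoff bound for the upper tail of \<open>f - E f\<close>; the lower tail is the upper tail
  of \<open>-f\<close>.
\<close>

lemma sq_le_exp_plus_exp_minus: "u\<^sup>2 \<le> exp u + exp (- u) - 2" for u :: real
proof -
  have "\<bar>u / 2\<bar> \<le> \<bar>(exp (u / 2) - inverse (exp (u / 2))) / 2\<bar>"
    by (rule real_le_abs_sinh)
  then have "(u / 2)\<^sup>2 \<le> ((exp (u / 2) - inverse (exp (u / 2))) / 2)\<^sup>2"
    by (simp only: abs_le_square_iff)
  also have "\<dots> = (exp u + exp (- u) - 2) / 4"
    by (simp add: power2_eq_square field_simps exp_minus flip: exp_add)
  finally show ?thesis
    by (simp add: power_divide)
qed

lemma min_one_mult_exp_le:
  fixes u d :: real
  assumes "0 \<le> u" "0 \<le> d"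
  shows "min 1 (u * exp d) \<le> u + d"
proof (cases "u * exp d \<le> 1")
  case True
  then have "u \<le> exp (- d)"
    by (simp add: exp_minus field_simps)
  have "u * exp d - u = u * (exp d - 1)"
    by (simp add: algebra_simps)
  also have "\<dots> \<le> exp (- d) * (exp d - 1)"
    using \<open>u \<le> exp (- d)\<close> assms(2) by (intro mult_right_mono) auto
  also have "\<dots> = 1 - exp (- d)"
    by (simp add: algebra_simps exp_minus)
  also have "\<dots> \<le> d"
    using exp_ge_add_one_self[of "- d"] by simp
  finally show ?thesis
    by simp
next
  case False
  then have "exp (- d) < u"
    by (simp add: exp_minus field_simps)
  moreover have "1 - d \<le> exp (- d)"
    using exp_ge_add_one_self[of "- d"] by simp
  ultimately show ?thesis
    by simp
qed

lemma min_one_exp_le: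
  fixes a b s t \<alpha> :: real
  assumes \<alpha>: "0 < \<alpha>" and s: "0 \<le> s"
  shows "min 1 (exp (\<alpha> * (a + b - t))) \<le> exp (\<alpha> * (a + s - t)) + \<bar>b\<bar> / (s + 1 / \<alpha>)"
proof -
  define u where "u = exp (\<alpha> * (a + s - t))"
  have c: "0 < s + 1 / \<alpha>"
    using \<alpha> s by (simp add: add_nonneg_pos)
  have u: "0 < u"
    by (simp add: u_def)
  consider "b \<le> s" | "s + 1 / \<alpha> \<le> b" | "s < b" "\<alpha> * (b - s) < 1"
    using \<alpha> by (fastforce simp: field_simps)
  then show ?thesis
  proof cases
    case 1
    then have "min 1 (exp (\<alpha> * (a + b - t))) \<le> u"
      using \<alpha> by (simp add: u_def min.coboundedI2)
    moreover have "0 \<le> \<bar>b\<bar> / (s + 1 / \<alpha>)"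
      using c by simp
    ultimately show ?thesis
      unfolding u_def by linarith
  next
    case 2
    then have "1 \<le> \<bar>b\<bar> / (s + 1 / \<alpha>)"
      using c by simp
    then show ?thesis
      using u min.cobounded1[of 1 "exp (\<alpha> * (a + b - t))"] unfolding u_def by linarith
  next
    case 3
    define d where "d = \<alpha> * (b - s)"
    have "exp (\<alpha> * (a + b - t)) = u * exp d"
      by (simp add: u_def d_def algebra_simps flip: exp_add)
    moreover have "min 1 (u * exp d) \<le> u + d"
      using 3 \<alpha> u by (intro min_one_mult_exp_le) (auto simp: d_def)
    moreover have "d \<le> \<bar>b\<bar> / (s + 1 / \<alpha>)"
    proof -
      have "d * (s + 1 / \<alpha>) = s * d + (b - s)"
        using \<alpha> by (simp add: d_def field_simps)
      also have "\<dots> \<le> \<bar>b\<bar>"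
        using 3 s mult_left_mono[of d 1 s] by (simp add: d_def)
      finally show ?thesis
        using c by (simp add: field_simps)
    qed
    ultimately show ?thesis
      by (simp add: u_def)
  qed
qed

lemma le_mult_INF:
  fixes x c :: real and D :: "'a \<Rightarrow> real"
  assumes "0 < c" "A \<noteq> {}" "\<And>a. a \<in> A \<Longrightarrow> x \<le> c * D a"
  shows "x \<le> c * (INF a\<in>A. D a)"
proof -
  have "x / c \<le> (INF a\<in>A. D a)"
    using assms by (intro cINF_greatest) (auto simp: field_simps)
  then show ?thesis
    using assms(1) by (simp add: field_simps)
qed

lemma exp_set_average_le_set_integral:
  fixes f :: "'a \<Rightarrow> real"
  assumes S: "S \<in> sets M" and int: "set_integrable M S f"
    and int_exp: "set_integrable M S (\<lambda>x. exp (f x))" and pos: "0 < measure M S"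
  shows "measure M S * exp ((LINT x:S|M. f x) / measure M S) \<le> (LINT x:S|M. exp (f x))"
proof -
  define \<mu> where "\<mu> = measure M S"
  define c where "c = (LINT x:S|M. f x) / \<mu>"
  have fin: "emeasure M S \<noteq> \<infinity>"
    using pos by (auto simp: measure_def)
  then have const: "set_integrable M S (\<lambda>_. a)" for a :: real
    unfolding set_integrable_def
    by (intro integrable_scaleR_left integrable_real_indicator S) (auto simp: top.not_eq_extremum)
  have "(LINT x:S|M. 1 + (f x - c)) = \<mu> + (LINT x:S|M. f x) - \<mu> * c"
    using const int fin S by (simp add: set_integral_const \<mu>_def)
  also have "\<dots> = \<mu>"
    using pos by (simp add: c_def \<mu>_def)
  finally have "\<mu> * exp c = (LINT x:S|M. exp c * (1 + (f x - c)))"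
    by simp
  also have "\<dots> \<le> (LINT x:S|M. exp (f x))"
  proof (rule set_integral_mono)
    show "set_integrable M S (\<lambda>x. exp c * (1 + (f x - c)))"
      using const int by simp
    fix x
    have "exp c * (1 + (f x - c)) \<le> exp c * exp (f x - c)"
      by (intro mult_left_mono exp_ge_add_one_self) simp
    then show "exp c * (1 + (f x - c)) \<le> exp (f x)"
      by (simp add: exp_diff)
  qed (rule int_exp)
  finally show ?thesis
    by (simp add: \<mu>_def c_def)
qed

lemma exp_set_average_le:
  fixes f :: "'a \<Rightarrow> real"
  assumes [measurable]: "f \<in> borel_measurable M" "S \<in> sets M"
    and int: "set_integrable M S f" and pos: "0 < measure M S"
  shows "ennreal (measure M S * exp ((LINT x:S|M. f x) / measure M S))
    \<le> (\<integral>\<^sup>+x\<in>S. ennreal (exp (f x)) \<partial>M)"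
proof -
  have eq: "(\<integral>\<^sup>+x\<in>S. ennreal (exp (f x)) \<partial>M) = (\<integral>\<^sup>+x. ennreal (indicator S x *\<^sub>R exp (f x)) \<partial>M)"
    by (intro nn_integral_cong) (simp split: split_indicator)
  show ?thesis
  proof (cases "set_integrable M S (\<lambda>x. exp (f x))")
    case True
    then have "(\<integral>\<^sup>+x\<in>S. ennreal (exp (f x)) \<partial>M) = ennreal (LINT x:S|M. exp (f x))"
      unfolding eq set_integrable_def set_lebesgue_integral_def by (intro nn_integral_eq_integral) auto
    then show ?thesis
      using exp_set_average_le_set_integral[OF assms(2) int True pos] by (simp add: ennreal_leI)
  next
    case False
    have "(\<integral>\<^sup>+x\<in>S. ennreal (exp (f x)) \<partial>M) = \<infinity>"
    proof (rule ccontr)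
      assume "(\<integral>\<^sup>+x\<in>S. ennreal (exp (f x)) \<partial>M) \<noteq> \<infinity>"
      then have "integrable M (\<lambda>x. indicator S x *\<^sub>R exp (f x))"
      proof (intro integrableI_nonneg)
        show "(\<lambda>x. indicator S x *\<^sub>R exp (f x)) \<in> borel_measurable M"
          by measurable
      qed (auto simp: eq top.not_eq_extremum)
      with False show False
        by (simp add: set_integrable_def)
    qed
    then show ?thesis
      by simp
  qed
qed

lemma (in prob_space) exp_expectation_le:
  assumes "X \<in> borel_measurable M" "integrable M X"
  shows "ennreal (exp (expectation X)) \<le> (\<integral>\<^sup>+x. ennreal (exp (X x)) \<partial>M)"
proof -
  have "set_integrable M (space M) X"
    unfolding set_integrable_def using assms(2) by (rule integrable_mult_indicator[OF sets.top])
  then show ?thesis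
    using exp_set_average_le[of X M "space M"] assms prob_space by (simp add: set_integral_space)
qed

lemma nn_integral_abs_indicator_le_sqrt:
  fixes u :: "'a \<Rightarrow> real"
  assumes [measurable]: "u \<in> borel_measurable M" "A \<in> sets M"
    and int: "integrable M (\<lambda>x. (u x)\<^sup>2)" and fin: "emeasure M A < \<infinity>"
  shows "(\<integral>\<^sup>+x. ennreal \<bar>u x\<bar> * indicator A x \<partial>M) \<le> ennreal (sqrt (measure M A * (\<integral>x. (u x)\<^sup>2 \<partial>M)))"
proof -
  have "(\<integral>\<^sup>+x. ennreal \<bar>u x\<bar> * indicator A x \<partial>M)\<^sup>2
      \<le> (\<integral>\<^sup>+x. ennreal \<bar>u x\<bar> ^ 2 \<partial>M) * (\<integral>\<^sup>+x. indicator A x ^ 2 \<partial>M)"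
    by (rule Cauchy_Schwarz_nn_integral) measurable
  also have "(\<integral>\<^sup>+x. ennreal \<bar>u x\<bar> ^ 2 \<partial>M) = ennreal (\<integral>x. (u x)\<^sup>2 \<partial>M)"
    using int by (simp add: ennreal_power nn_integral_eq_integral)
  also have "(\<integral>\<^sup>+x. indicator A x ^ 2 \<partial>M) = (\<integral>\<^sup>+x. indicator A x \<partial>M)"
    by (intro nn_integral_cong) (simp split: split_indicator)
  also have "\<dots> = ennreal (measure M A)"
    using fin by (simp add: emeasure_eq_ennreal_measure)
  finally have "(\<integral>\<^sup>+x. ennreal \<bar>u x\<bar> * indicator A x \<partial>M)\<^sup>2 \<le> ennreal (measure M A * (\<integral>x. (u x)\<^sup>2 \<partial>M))"
    by (simp add: ennreal_mult' mult.commute)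
  then show ?thesis
    by (cases "\<integral>\<^sup>+x. ennreal \<bar>u x\<bar> * indicator A x \<partial>M")
      (auto simp: ennreal_power real_le_rsqrt top_power_ennreal top_unique)
qed

section \<open>Gradients\<close>

lemma borel_measurable_differentiable:
  fixes f :: "'a::real_normed_vector \<Rightarrow> 'b::real_normed_vector"
  assumes "\<And>x. f differentiable (at x)"
  shows "f \<in> borel_measurable borel"
  using assms
  by (intro borel_measurable_continuous_onI continuous_at_imp_continuous_on ballI
      differentiable_imp_continuous_within)

lemma linear_functional_eq_inner:
  fixes D :: "'a::euclidean_space \<Rightarrow> real"
  assumes "linear D"
  shows "D w = (\<Sum>i\<in>Basis. D i *\<^sub>R i) \<bullet> w"
proof -
  have "D w = D (\<Sum>i\<in>Basis. (w \<bullet> i) *\<^sub>R i)"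
    by (simp only: euclidean_representation)
  also have "\<dots> = (\<Sum>i\<in>Basis. (w \<bullet> i) * D i)"
    using assms by (simp only: linear_sum linear_scale real_scaleR_def)
  also have "\<dots> = (\<Sum>i\<in>Basis. D i *\<^sub>R i) \<bullet> w"
    by (simp only: inner_sum_left inner_scaleR_left inner_commute[of w] mult.commute)
  finally show ?thesis .
qed

lemma has_derivative_grad:
  assumes "f differentiable (at x)"
  shows "(f has_derivative (\<lambda>w. grad f x \<bullet> w)) (at x)"
proof -
  have "(f has_derivative frechet_derivative f (at x)) (at x)"
    using assms by (rule frechet_derivative_works[THEN iffD1])
  moreover have "frechet_derivative f (at x) = (\<lambda>w. grad f x \<bullet> w)"
    unfolding grad_def using linear_functional_eq_inner[OF linear_frechet_derivative[OF assms]] ..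
  ultimately show ?thesis
    by simp
qed

lemma grad_eqI:
  assumes "(f has_derivative (\<lambda>w. v \<bullet> w)) (at x)"
  shows "grad f x = v"
  using euclidean_representation[of v]
  unfolding grad_def frechet_derivative_at[OF assms, symmetric]
  by (simp add: inner_commute)

lemma grad_uminus:
  assumes "f differentiable (at x)"
  shows "grad (\<lambda>x. - f x) x = - grad f x"
  by (rule grad_eqI) (use has_derivative_minus[OF has_derivative_grad[OF assms]] in simp)

lemma LIMSEQ_difference_quotient_grad:
  assumes "f differentiable (at x)"
  shows "(\<lambda>n. (f (x + inverse (real (Suc n)) *\<^sub>R i) - f x) * real (Suc n)) \<longlonglongrightarrow> grad f x \<bullet> i"
proof -
  have "((\<lambda>h. x + h *\<^sub>R i) has_derivative (\<lambda>h. h *\<^sub>R i)) (at 0)"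
    by (auto intro!: derivative_eq_intros)
  moreover have "(f has_derivative (\<lambda>w. grad f x \<bullet> w)) (at (x + 0 *\<^sub>R i))"
    using has_derivative_grad[OF assms] by simp
  ultimately have "((\<lambda>h. f (x + h *\<^sub>R i)) has_derivative (\<lambda>h. grad f x \<bullet> (h *\<^sub>R i))) (at 0)"
    by (rule has_derivative_compose[of "\<lambda>h. x + h *\<^sub>R i"])
  then have "((\<lambda>h. f (x + h *\<^sub>R i)) has_real_derivative (grad f x \<bullet> i)) (at 0)"
    unfolding has_field_derivative_def by (rule has_derivative_eq_rhs) (auto simp: fun_eq_iff)
  then have "((\<lambda>h. (f (x + h *\<^sub>R i) - f x) / h) \<longlongrightarrow> grad f x \<bullet> i) (at 0)"
    by (simp add: DERIV_def)
  moreover have "filterlim (\<lambda>n. inverse (real (Suc n))) (at 0) sequentially"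
    by (rule filterlim_atI[OF LIMSEQ_inverse_real_of_nat]) simp
  ultimately have "(\<lambda>n. (f (x + inverse (real (Suc n)) *\<^sub>R i) - f x) / inverse (real (Suc n)))
      \<longlonglongrightarrow> grad f x \<bullet> i"
    by (rule filterlim_compose)
  then show ?thesis
    by (simp add: divide_inverse)
qed

lemma borel_measurable_grad:
  fixes f :: "'a::euclidean_space \<Rightarrow> real"
  assumes diff: "\<And>x. f differentiable (at x)"
  shows "grad f \<in> borel_measurable borel"
proof -
  have [measurable]: "f \<in> borel_measurable borel"
    using diff by (rule borel_measurable_differentiable)
  have [measurable]: "(\<lambda>x. grad f x \<bullet> i) \<in> borel_measurable borel" for i :: 'a
    by (rule borel_measurable_LIMSEQ_real[OF LIMSEQ_difference_quotient_grad[OF diff]]) measurable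
  have "grad f = (\<lambda>x. \<Sum>i\<in>Basis. (grad f x \<bullet> i) *\<^sub>R i)"
    by (simp only: euclidean_representation)
  also have "\<dots> \<in> borel_measurable borel"
    by measurable
  finally show ?thesis .
qed

section \<open>Translations, shears and rotations of Lebesgue measure\<close>

lemma nn_integral_lborel_add:
  fixes c :: "'a::euclidean_space"
  assumes [measurable]: "f \<in> borel_measurable borel"
  shows "(\<integral>\<^sup>+x. f (c + x) \<partial>lborel) = (\<integral>\<^sup>+x. f x \<partial>lborel)"
proof -
  have "(\<integral>\<^sup>+x. f x \<partial>lborel) = (\<integral>\<^sup>+x. f x \<partial>distr lborel borel ((+) c))"
    by (simp add: lborel_distr_plus)
  also have "\<dots> = (\<integral>\<^sup>+x. f (c + x) \<partial>lborel)"
    by (subst nn_integral_distr) auto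
  finally show ?thesis ..
qed

lemma nn_integral_lborel_uminus:
  fixes f :: "'a::euclidean_space \<Rightarrow> ennreal"
  assumes [measurable]: "f \<in> borel_measurable borel"
  shows "(\<integral>\<^sup>+x. f (- x) \<partial>lborel) = (\<integral>\<^sup>+x. f x \<partial>lborel)"
proof -
  have "distr lborel borel uminus = (lborel :: 'a measure)"
    using lborel_affine[of "-1" "0::'a"] by (simp add: density_1)
  then have "(\<integral>\<^sup>+x. f x \<partial>lborel) = (\<integral>\<^sup>+x. f x \<partial>distr lborel borel uminus)"
    by simp
  also have "\<dots> = (\<integral>\<^sup>+x. f (- x) \<partial>lborel)"
    by (subst nn_integral_distr) auto
  finally show ?thesis ..
qed

lemma nn_integral_lborel_shear_snd:
  fixes H :: "'a::euclidean_space \<Rightarrow> 'a \<Rightarrow> ennreal"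
  assumes [measurable]: "(\<lambda>(x, y). H x y) \<in> borel_measurable (borel \<Otimes>\<^sub>M borel)"
  shows "(\<integral>\<^sup>+x. \<integral>\<^sup>+y. H x (y + a *\<^sub>R x) \<partial>lborel \<partial>lborel) = (\<integral>\<^sup>+x. \<integral>\<^sup>+y. H x y \<partial>lborel \<partial>lborel)"
proof (rule nn_integral_cong)
  fix x :: 'a
  show "(\<integral>\<^sup>+y. H x (y + a *\<^sub>R x) \<partial>lborel) = (\<integral>\<^sup>+y. H x y \<partial>lborel)"
    using nn_integral_lborel_add[of "H x" "a *\<^sub>R x"] by (simp add: add.commute)
qed

lemma nn_integral_lborel_shear_fst:
  fixes H :: "'a::euclidean_space \<Rightarrow> 'a \<Rightarrow> ennreal"
  assumes [measurable]: "(\<lambda>(x, y). H x y) \<in> borel_measurable (borel \<Otimes>\<^sub>M borel)"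
  shows "(\<integral>\<^sup>+x. \<integral>\<^sup>+y. H (x + a *\<^sub>R y) y \<partial>lborel \<partial>lborel) = (\<integral>\<^sup>+x. \<integral>\<^sup>+y. H x y \<partial>lborel \<partial>lborel)"
proof -
  have "(\<integral>\<^sup>+x. \<integral>\<^sup>+y. H (x + a *\<^sub>R y) y \<partial>lborel \<partial>lborel)
      = (\<integral>\<^sup>+y. \<integral>\<^sup>+x. H (x + a *\<^sub>R y) y \<partial>lborel \<partial>(lborel::'a measure))"
    by (rule lborel_pair.Fubini') measurable
  also have "\<dots> = (\<integral>\<^sup>+y. \<integral>\<^sup>+x. H x y \<partial>lborel \<partial>(lborel::'a measure))"
  proof (rule nn_integral_cong)
    fix y :: 'a
    show "(\<integral>\<^sup>+x. H (x + a *\<^sub>R y) y \<partial>lborel) = (\<integral>\<^sup>+x. H x y \<partial>lborel)"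
      using nn_integral_lborel_add[of "\<lambda>x. H x y" "a *\<^sub>R y"] by (simp add: add.commute)
  qed
  also have "\<dots> = (\<integral>\<^sup>+x. \<integral>\<^sup>+y. H x y \<partial>lborel \<partial>lborel)"
    by (rule lborel_pair.Fubini'[symmetric]) measurable
  finally show ?thesis .
qed

lemma nn_integral_lborel_uminus_uminus:
  fixes H :: "'a::euclidean_space \<Rightarrow> 'a \<Rightarrow> ennreal"
  assumes [measurable]: "(\<lambda>(x, y). H x y) \<in> borel_measurable (borel \<Otimes>\<^sub>M borel)"
  shows "(\<integral>\<^sup>+x. \<integral>\<^sup>+y. H (- x) (- y) \<partial>lborel \<partial>lborel) = (\<integral>\<^sup>+x. \<integral>\<^sup>+y. H x y \<partial>lborel \<partial>lborel)"
proof -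
  have "(\<integral>\<^sup>+x. \<integral>\<^sup>+y. H (- x) (- y) \<partial>lborel \<partial>lborel)
      = (\<integral>\<^sup>+x. \<integral>\<^sup>+y. H (- x) y \<partial>lborel \<partial>(lborel::'a measure))"
    by (intro nn_integral_cong nn_integral_lborel_uminus) measurable
  also have "\<dots> = (\<integral>\<^sup>+x. \<integral>\<^sup>+y. H x y \<partial>lborel \<partial>lborel)"
    by (rule nn_integral_lborel_uminus[of "\<lambda>x. \<integral>\<^sup>+y. H x y \<partial>lborel"]) measurable
  finally show ?thesis .
qed

text \<open>For \<open>c = cos \<theta>\<close> and \<open>s = sin \<theta>\<close> the shear parameter is \<open>t = tan (\<theta> / 2)\<close>.\<close>

lemma rotation_eq_shears:
  fixes x y :: "'a::real_vector"
  assumes cs: "c\<^sup>2 + s\<^sup>2 = 1" and c: "c \<noteq> -1"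
  defines "t \<equiv> s / (1 + c)"
  shows "c *\<^sub>R x - s *\<^sub>R y = (x + (- t) *\<^sub>R y) + (- t) *\<^sub>R (y + s *\<^sub>R (x + (- t) *\<^sub>R y))"
    and "s *\<^sub>R x + c *\<^sub>R y = y + s *\<^sub>R (x + (- t) *\<^sub>R y)"
proof -
  have ts: "1 - t * s = c"
    using cs c by (simp add: t_def field_simps power2_eq_square)
  have "t * (1 + c) = s"
    using c by (simp add: t_def add_eq_0_iff)
  then have ts2: "t + t * c = s"
    by (simp add: algebra_simps)
  have "(x + (- t) *\<^sub>R y) + (- t) *\<^sub>R (y + s *\<^sub>R (x + (- t) *\<^sub>R y))
      = (1 - t * s) *\<^sub>R x - (t + t * (1 - t * s)) *\<^sub>R y"
    by (simp add: algebra_simps scaleR_2 flip: scaleR_add_left)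
  then show "c *\<^sub>R x - s *\<^sub>R y = (x + (- t) *\<^sub>R y) + (- t) *\<^sub>R (y + s *\<^sub>R (x + (- t) *\<^sub>R y))"
    by (simp only: ts ts2)
  have "y + s *\<^sub>R (x + (- t) *\<^sub>R y) = s *\<^sub>R x + (1 - t * s) *\<^sub>R y"
    by (simp add: algebra_simps)
  then show "s *\<^sub>R x + c *\<^sub>R y = y + s *\<^sub>R (x + (- t) *\<^sub>R y)"
    by (simp only: ts)
qed

lemma nn_integral_lborel_rotation:
  fixes H :: "'a::euclidean_space \<Rightarrow> 'a \<Rightarrow> ennreal" and c s :: real
  assumes H [measurable]: "(\<lambda>(x, y). H x y) \<in> borel_measurable (borel \<Otimes>\<^sub>M borel)"
    and cs: "c\<^sup>2 + s\<^sup>2 = 1"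
  shows "(\<integral>\<^sup>+x. \<integral>\<^sup>+y. H (c *\<^sub>R x - s *\<^sub>R y) (s *\<^sub>R x + c *\<^sub>R y) \<partial>lborel \<partial>lborel)
       = (\<integral>\<^sup>+x. \<integral>\<^sup>+y. H x y \<partial>lborel \<partial>lborel)"
proof (cases "c = -1")
  case True
  then have "s = 0"
    using cs by simp
  with True show ?thesis
    using nn_integral_lborel_uminus_uminus[OF H] by simp
next
  case False
  define t where "t = s / (1 + c)"
  define H2 where "H2 u w = H (u + (- t) *\<^sub>R w) w" for u w
  define H1 where "H1 u w = H2 u (w + s *\<^sub>R u)" for u w
  have [measurable]: "(\<lambda>(u, w). H2 u w) \<in> borel_measurable (borel \<Otimes>\<^sub>M borel)"
    unfolding H2_def by measurable
  have [measurable]: "(\<lambda>(u, w). H1 u w) \<in> borel_measurable (borel \<Otimes>\<^sub>M borel)"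
    unfolding H1_def by measurable
  have "(\<integral>\<^sup>+x. \<integral>\<^sup>+y. H (c *\<^sub>R x - s *\<^sub>R y) (s *\<^sub>R x + c *\<^sub>R y) \<partial>lborel \<partial>lborel)
      = (\<integral>\<^sup>+x. \<integral>\<^sup>+y. H1 (x + (- t) *\<^sub>R y) y \<partial>lborel \<partial>lborel)"
    unfolding rotation_eq_shears[OF cs False] t_def H1_def H2_def ..
  also have "\<dots> = (\<integral>\<^sup>+x. \<integral>\<^sup>+y. H2 x (y + s *\<^sub>R x) \<partial>lborel \<partial>lborel)"
    unfolding H1_def by (rule nn_integral_lborel_shear_fst) measurable
  also have "\<dots> = (\<integral>\<^sup>+x. \<integral>\<^sup>+y. H (x + (- t) *\<^sub>R y) y \<partial>lborel \<partial>lborel)"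
    unfolding H2_def by (rule nn_integral_lborel_shear_snd) measurable
  also have "\<dots> = (\<integral>\<^sup>+x. \<integral>\<^sup>+y. H x y \<partial>lborel \<partial>lborel)"
    by (rule nn_integral_lborel_shear_fst[OF H])
  finally show ?thesis .
qed

section \<open>The standard Gaussian measure\<close>

definition std_gauss_density :: "'a::euclidean_space \<Rightarrow> real" where
  "std_gauss_density x = (2 * pi) powr (- real DIM('a) / 2) * exp (- (norm x)\<^sup>2 / 2)"

lemma std_gauss_density_nonneg: "0 \<le> std_gauss_density x"
  by (simp add: std_gauss_density_def)

lemma borel_measurable_std_gauss_density [measurable]: "std_gauss_density \<in> borel_measurable borel"
  unfolding std_gauss_density_def[abs_def] by measurable

lemma std_gauss_eq_density: "std_gauss = density lborel (\<lambda>x. ennreal (std_gauss_density x))"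
  unfolding std_gauss_def std_gauss_density_def ..

lemma sets_std_gauss [simp, measurable_cong]: "sets std_gauss = sets borel"
  by (simp add: std_gauss_eq_density)

lemma space_std_gauss [simp]: "space std_gauss = UNIV"
  by (simp add: std_gauss_eq_density)

lemma nn_integral_std_gauss:
  "f \<in> borel_measurable borel \<Longrightarrow>
    (\<integral>\<^sup>+x. f x \<partial>std_gauss) = (\<integral>\<^sup>+x. ennreal (std_gauss_density x) * f x \<partial>lborel)"
  by (simp add: std_gauss_eq_density nn_integral_density)

lemma std_gauss_density_eq_prod:
  "std_gauss_density (x::'a::euclidean_space) = (\<Prod>b\<in>Basis. std_normal_density (x \<bullet> b))"
proof -
  have "(norm x)\<^sup>2 = (\<Sum>b\<in>Basis. (x \<bullet> b)\<^sup>2)"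
    by (simp only: power2_norm_eq_inner, subst euclidean_inner, simp add: power2_eq_square)
  then have "exp (- (norm x)\<^sup>2 / 2) = (\<Prod>b\<in>Basis. exp (- (x \<bullet> b)\<^sup>2 / 2))"
    by (simp add: sum_divide_distrib[symmetric] exp_sum[symmetric] sum_negf)
  moreover have "(2 * pi) powr (- real DIM('a) / 2) = (\<Prod>b\<in>(Basis::'a set). 1 / sqrt (2 * pi))"
  proof -
    have "(2 * pi) powr (- real DIM('a) / 2) = ((2 * pi) powr (- 1 / 2)) ^ DIM('a)"
      by (simp add: powr_realpow[symmetric] powr_powr)
    also have "(2 * pi) powr (- 1 / 2) = 1 / sqrt (2 * pi)"
      by (simp add: powr_minus_divide powr_half_sqrt)
    finally show ?thesis
      by simp
  qed
  ultimately show ?thesis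
    by (simp only: std_gauss_density_def std_normal_density_def prod.distrib)
qed

lemma prob_space_std_gauss: "prob_space (std_gauss :: 'a::euclidean_space measure)"
proof (rule prob_spaceI)
  have "(\<integral>\<^sup>+x. ennreal (std_gauss_density (x::'a)) \<partial>lborel)
      = (\<integral>\<^sup>+x. (\<Prod>b\<in>Basis. ennreal (std_normal_density ((x::'a) \<bullet> b))) \<partial>lborel)"
    by (rule nn_integral_cong) (simp add: std_gauss_density_eq_prod prod_ennreal)
  also have "\<dots> = (\<Prod>b\<in>(Basis::'a set). (\<integral>\<^sup>+x. ennreal (std_normal_density x) \<partial>lborel))"
    by (rule nn_integral_lborel_prod) auto
  also have "(\<integral>\<^sup>+x. ennreal (std_normal_density x) \<partial>lborel) = 1"
  proof -
    interpret prob_space "density lborel (normal_density 0 1)"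
      by (rule prob_space_normal_density) simp
    show ?thesis
      using emeasure_space_1 by (simp add: emeasure_density)
  qed
  finally show "emeasure std_gauss (space (std_gauss :: 'a measure)) = 1"
    by (simp add: std_gauss_eq_density emeasure_density)
qed

interpretation std_gauss: prob_space "std_gauss :: 'a::euclidean_space measure"
  by (rule prob_space_std_gauss)

lemma measure_std_gauss_UNIV [simp]: "measure std_gauss UNIV = 1"
  using std_gauss.prob_space by simp

lemma emeasure_std_gauss_UNIV [simp]: "emeasure std_gauss UNIV = 1"
  using std_gauss.emeasure_space_1 by simp

lemma emeasure_std_gauss_less_top [simp]: "emeasure (std_gauss :: 'a::euclidean_space measure) A < \<top>"
  using std_gauss.emeasure_finite[of A] by (simp add: less_top[symmetric])

lemma std_gauss_density_shift:
  "std_gauss_density y * exp (v \<bullet> y) = exp ((norm v)\<^sup>2 / 2) * std_gauss_density (y - v)"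
proof -
  have "(norm (y - v))\<^sup>2 = (norm y)\<^sup>2 - 2 * (v \<bullet> y) + (norm v)\<^sup>2"
    by (simp add: power2_norm_eq_inner inner_diff_left inner_diff_right inner_commute)
  then have "- (norm y)\<^sup>2 / 2 + v \<bullet> y = (norm v)\<^sup>2 / 2 + - (norm (y - v))\<^sup>2 / 2"
    by (simp add: field_simps)
  then show ?thesis
    by (simp add: std_gauss_density_def mult_ac flip: exp_add)
qed

lemma nn_integral_exp_inner_std_gauss:
  "(\<integral>\<^sup>+y. ennreal (exp ((v::'a::euclidean_space) \<bullet> y)) \<partial>std_gauss) = ennreal (exp ((norm v)\<^sup>2 / 2))"
proof -
  have "(\<integral>\<^sup>+y. ennreal (exp (v \<bullet> y)) \<partial>std_gauss)
      = (\<integral>\<^sup>+y. ennreal (exp ((norm v)\<^sup>2 / 2)) * ennreal (std_gauss_density (- v + y)) \<partial>lborel)"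
    by (subst nn_integral_std_gauss)
      (auto simp: std_gauss_density_shift std_gauss_density_nonneg ennreal_mult'[symmetric]
        intro!: nn_integral_cong)
  also have "\<dots> = ennreal (exp ((norm v)\<^sup>2 / 2)) * (\<integral>\<^sup>+y. ennreal (std_gauss_density (y::'a)) \<partial>lborel)"
    using nn_integral_lborel_add[of "\<lambda>y. ennreal (std_gauss_density y)" "- v"]
    by (simp add: nn_integral_cmult)
  also have "(\<integral>\<^sup>+y. ennreal (std_gauss_density (y::'a)) \<partial>lborel)
      = emeasure std_gauss (space (std_gauss :: 'a measure))"
    by (simp add: std_gauss_eq_density emeasure_density)
  finally show ?thesis
    by simp
qed

lemma integrable_exp_inner_std_gauss: "integrable std_gauss (\<lambda>y. exp (v \<bullet> y))"
  by (rule integrableI_nonneg) (auto simp: nn_integral_exp_inner_std_gauss)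

lemma integral_exp_inner_std_gauss: "(\<integral>y. exp (v \<bullet> y) \<partial>std_gauss) = exp ((norm v)\<^sup>2 / 2)"
proof -
  have "ennreal (\<integral>y. exp (v \<bullet> y) \<partial>std_gauss) = ennreal (exp ((norm v)\<^sup>2 / 2))"
    by (subst nn_integral_eq_integral[symmetric])
      (auto simp: integrable_exp_inner_std_gauss nn_integral_exp_inner_std_gauss)
  then show ?thesis
    by (simp add: integral_nonneg_AE)
qed

lemma integrable_inner_sq_std_gauss: "integrable std_gauss (\<lambda>y. (v \<bullet> y)\<^sup>2)"
proof (rule Bochner_Integration.integrable_bound)
  show "integrable std_gauss (\<lambda>y. exp (v \<bullet> y) + exp ((- v) \<bullet> y))"
    by (intro Bochner_Integration.integrable_add integrable_exp_inner_std_gauss)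
  show "AE y in std_gauss. norm ((v \<bullet> y)\<^sup>2) \<le> norm (exp (v \<bullet> y) + exp ((- v) \<bullet> y))"
  proof (rule AE_I2)
    fix y
    have "(v \<bullet> y)\<^sup>2 \<le> exp (v \<bullet> y) + exp (- (v \<bullet> y)) - 2"
      by (rule sq_le_exp_plus_exp_minus)
    then show "norm ((v \<bullet> y)\<^sup>2) \<le> norm (exp (v \<bullet> y) + exp ((- v) \<bullet> y))"
      by simp
  qed
qed simp

lemma integral_inner_sq_std_gauss_le_mgf:
  assumes s: "0 < s"
  shows "(\<integral>y. (v \<bullet> y)\<^sup>2 \<partial>std_gauss) \<le> 2 * (exp ((norm (s *\<^sub>R v))\<^sup>2 / 2) - 1) / s\<^sup>2"
proof -
  define w where "w = s *\<^sub>R v"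
  have int: "integrable std_gauss (\<lambda>y. exp (w \<bullet> y))" "integrable std_gauss (\<lambda>y. exp (- (w \<bullet> y)))"
    using integrable_exp_inner_std_gauss[of w] integrable_exp_inner_std_gauss[of "- w"] by simp_all
  have mgf: "(\<integral>y. exp (w \<bullet> y) \<partial>std_gauss) = exp ((norm w)\<^sup>2 / 2)"
    "(\<integral>y. exp (- (w \<bullet> y)) \<partial>std_gauss) = exp ((norm w)\<^sup>2 / 2)"
    using integral_exp_inner_std_gauss[of w] integral_exp_inner_std_gauss[of "- w"]
    by (simp_all only: inner_minus_left norm_minus_cancel)
  have "(\<integral>y. (v \<bullet> y)\<^sup>2 \<partial>std_gauss) \<le> (\<integral>y. (exp (w \<bullet> y) + exp (- (w \<bullet> y)) - 2) / s\<^sup>2 \<partial>std_gauss)"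
  proof (rule integral_mono)
    show "integrable std_gauss (\<lambda>y. (exp (w \<bullet> y) + exp (- (w \<bullet> y)) - 2) / s\<^sup>2)"
      using int by (intro integrable_divide Bochner_Integration.integrable_diff
          Bochner_Integration.integrable_add std_gauss.integrable_const)
  next
    fix y
    have "(s * (v \<bullet> y))\<^sup>2 \<le> exp (s * (v \<bullet> y)) + exp (- (s * (v \<bullet> y))) - 2"
      by (rule sq_le_exp_plus_exp_minus)
    then show "(v \<bullet> y)\<^sup>2 \<le> (exp (w \<bullet> y) + exp (- (w \<bullet> y)) - 2) / s\<^sup>2"
      using s by (simp add: w_def field_simps power_mult_distrib)
  qed (rule integrable_inner_sq_std_gauss)
  also have "\<dots> = 2 * (exp ((norm (s *\<^sub>R v))\<^sup>2 / 2) - 1) / s\<^sup>2"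
    using int mgf
    by (simp add: w_def Bochner_Integration.integral_add Bochner_Integration.integral_diff)
  finally show ?thesis .
qed

lemma integral_inner_sq_std_gauss_le: "(\<integral>y. (v \<bullet> y)\<^sup>2 \<partial>std_gauss) \<le> (norm v)\<^sup>2"
proof (rule field_le_epsilon)
  fix \<epsilon> :: real
  assume "0 < \<epsilon>"
  show "(\<integral>y. (v \<bullet> y)\<^sup>2 \<partial>std_gauss) \<le> (norm v)\<^sup>2 + \<epsilon>"
  proof (cases "v = 0")
    case False
    define n where "n = norm v"
    define e where "e = min 1 (\<epsilon> / n\<^sup>2)"
    define s where "s = sqrt (2 * e) / n"
    have n: "0 < n"
      using False by (simp add: n_def)
    have e: "0 < e" "e \<le> 1" "n\<^sup>2 * e \<le> \<epsilon>"
      using \<open>0 < \<epsilon>\<close> n by (auto simp: e_def min_def field_simps)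
    have s: "0 < s" "s\<^sup>2 = 2 * e / n\<^sup>2"
      using e n by (simp_all add: s_def power_divide)
    have "(norm (s *\<^sub>R v))\<^sup>2 / 2 = e"
      using s n by (simp add: power_mult_distrib n_def)
    then have "(\<integral>y. (v \<bullet> y)\<^sup>2 \<partial>std_gauss) \<le> 2 * (exp e - 1) / s\<^sup>2"
      using integral_inner_sq_std_gauss_le_mgf[OF s(1), of v] by simp
    also have "\<dots> = n\<^sup>2 * ((exp e - 1) / e)"
      using s e n by (simp add: field_simps)
    also have "\<dots> \<le> n\<^sup>2 * (1 + e)"
      using exp_bound[of e] e by (intro mult_left_mono) (auto simp: field_simps power2_eq_square)
    also have "\<dots> \<le> (norm v)\<^sup>2 + \<epsilon>"
      using e by (simp add: n_def algebra_simps)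
    finally show ?thesis .
  qed (use \<open>0 < \<epsilon>\<close> in simp)
qed

lemma integrable_abs_inner_std_gauss: "integrable std_gauss (\<lambda>y. \<bar>v \<bullet> y\<bar>)"
proof (rule Bochner_Integration.integrable_bound)
  show "integrable std_gauss (\<lambda>y. 1 + (v \<bullet> y)\<^sup>2)"
    by (intro Bochner_Integration.integrable_add integrable_inner_sq_std_gauss) simp
  show "AE y in std_gauss. norm \<bar>v \<bullet> y\<bar> \<le> norm (1 + (v \<bullet> y)\<^sup>2)"
  proof (rule AE_I2)
    fix y
    have "0 \<le> (\<bar>v \<bullet> y\<bar> - 1 / 2)\<^sup>2"
      by simp
    then show "norm \<bar>v \<bullet> y\<bar> \<le> norm (1 + (v \<bullet> y)\<^sup>2)"
      by (simp add: power2_eq_square algebra_simps abs_mult_self_eq)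
  qed
qed simp

lemma integral_abs_inner_std_gauss_le: "(\<integral>y. \<bar>v \<bullet> y\<bar> \<partial>std_gauss) \<le> norm v"
proof (cases "v = 0")
  case False
  define n where "n = norm v"
  have n: "0 < n"
    using False by (simp add: n_def)
  have amgm: "\<bar>z\<bar> \<le> n / 2 + z\<^sup>2 / (2 * n)" for z :: real
  proof -
    have "0 \<le> (\<bar>z\<bar> - n)\<^sup>2"
      by simp
    then show ?thesis
      using n by (simp add: field_simps power2_eq_square)
  qed
  have "(\<integral>y. \<bar>v \<bullet> y\<bar> \<partial>std_gauss) \<le> (\<integral>y. n / 2 + (v \<bullet> y)\<^sup>2 / (2 * n) \<partial>std_gauss)"
    using amgm by (intro integral_mono integrable_abs_inner_std_gauss
        Bochner_Integration.integrable_add integrable_divide integrable_inner_sq_std_gauss) auto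
  also have "\<dots> = n / 2 + (\<integral>y. (v \<bullet> y)\<^sup>2 \<partial>std_gauss) / (2 * n)"
    by (simp add: integrable_inner_sq_std_gauss)
  also have "\<dots> \<le> n / 2 + n\<^sup>2 / (2 * n)"
    using integral_inner_sq_std_gauss_le[of v] n by (simp add: n_def divide_right_mono)
  also have "\<dots> = n"
    using n by (simp add: power2_eq_square)
  finally show ?thesis
    by (simp add: n_def)
qed simp

lemma nn_integral_abs_inner_std_gauss_le:
  "(\<integral>\<^sup>+y. ennreal \<bar>v \<bullet> y\<bar> \<partial>std_gauss) \<le> ennreal (norm v)"
  by (subst nn_integral_eq_integral)
    (auto intro: integrable_abs_inner_std_gauss ennreal_leI integral_abs_inner_std_gauss_le)

lemma integrable_norm_std_gauss: "integrable std_gauss (\<lambda>y::'a::euclidean_space. norm y)"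
proof (rule Bochner_Integration.integrable_bound)
  show "integrable std_gauss (\<lambda>y. \<Sum>b\<in>Basis. \<bar>b \<bullet> (y::'a)\<bar>)"
    by (intro Bochner_Integration.integrable_sum integrable_abs_inner_std_gauss)
  show "AE y in std_gauss. norm (norm y) \<le> norm (\<Sum>b\<in>Basis. \<bar>b \<bullet> (y::'a)\<bar>)"
    using norm_le_l1 by (auto simp: inner_commute intro!: AE_I2 order_trans[OF _ abs_ge_self])
qed simp

lemma nn_integral_std_gauss_pair:
  fixes F :: "'a::euclidean_space \<Rightarrow> 'a \<Rightarrow> ennreal"
  assumes [measurable]: "(\<lambda>(x, y). F x y) \<in> borel_measurable (borel \<Otimes>\<^sub>M borel)"
  shows "(\<integral>\<^sup>+x. \<integral>\<^sup>+y. F x y \<partial>std_gauss \<partial>std_gauss)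
       = (\<integral>\<^sup>+x. \<integral>\<^sup>+y. ennreal (std_gauss_density x * std_gauss_density y) * F x y \<partial>lborel \<partial>lborel)"
proof -
  have "(\<integral>\<^sup>+x. \<integral>\<^sup>+y. F x y \<partial>std_gauss \<partial>std_gauss)
      = (\<integral>\<^sup>+x. ennreal (std_gauss_density x) * (\<integral>\<^sup>+y. F x y \<partial>std_gauss) \<partial>lborel)"
    by (rule nn_integral_std_gauss) measurable
  also have "\<dots> = (\<integral>\<^sup>+x. ennreal (std_gauss_density x) *
          (\<integral>\<^sup>+y. ennreal (std_gauss_density y) * F x y \<partial>lborel) \<partial>lborel)"
    by (intro nn_integral_cong arg_cong2[where f = "(*)"] refl nn_integral_std_gauss) measurable
  also have "\<dots> = (\<integral>\<^sup>+x. \<integral>\<^sup>+y. ennreal (std_gauss_density x * std_gauss_density y)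
          * F x y \<partial>lborel \<partial>lborel)"
    by (intro nn_integral_cong, subst nn_integral_cmult[symmetric])
      (auto simp: ennreal_mult std_gauss_density_nonneg mult.assoc)
  finally show ?thesis .
qed

lemma std_gauss_density_reflection:
  fixes x y :: "'a::euclidean_space"
  assumes "c\<^sup>2 + s\<^sup>2 = 1"
  shows "std_gauss_density (c *\<^sub>R x + s *\<^sub>R y) * std_gauss_density (s *\<^sub>R x - c *\<^sub>R y)
       = std_gauss_density x * std_gauss_density y"
proof -
  have "(norm (c *\<^sub>R x + s *\<^sub>R y))\<^sup>2 + (norm (s *\<^sub>R x - c *\<^sub>R y))\<^sup>2
      = (c\<^sup>2 + s\<^sup>2) * (x \<bullet> x) + (c\<^sup>2 + s\<^sup>2) * (y \<bullet> y)"
    unfolding power2_norm_eq_inner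
    by (simp add: inner_add_left inner_add_right inner_diff_left inner_diff_right
        inner_commute[of y x] algebra_simps power2_eq_square)
  then have norms: "(norm (c *\<^sub>R x + s *\<^sub>R y))\<^sup>2 + (norm (s *\<^sub>R x - c *\<^sub>R y))\<^sup>2
      = (norm x)\<^sup>2 + (norm y)\<^sup>2"
    using assms by (simp add: power2_norm_eq_inner)
  have "std_gauss_density u * std_gauss_density w
      = ((2 * pi) powr (- real DIM('a) / 2))\<^sup>2 * exp (- ((norm u)\<^sup>2 + (norm w)\<^sup>2) / 2)" for u w :: 'a
    by (simp add: std_gauss_density_def power2_eq_square field_simps flip: exp_add)
  then show ?thesis
    by (simp only: norms)
qed

lemma nn_integral_std_gauss_reflection:
  fixes G :: "'a::euclidean_space \<Rightarrow> 'a \<Rightarrow> ennreal" and c s :: real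
  assumes G [measurable]: "(\<lambda>(x, y). G x y) \<in> borel_measurable (borel \<Otimes>\<^sub>M borel)"
    and cs: "c\<^sup>2 + s\<^sup>2 = 1"
  shows "(\<integral>\<^sup>+x. \<integral>\<^sup>+y. G (c *\<^sub>R x + s *\<^sub>R y) (s *\<^sub>R x - c *\<^sub>R y) \<partial>std_gauss \<partial>std_gauss)
       = (\<integral>\<^sup>+x. \<integral>\<^sup>+y. G x y \<partial>std_gauss \<partial>std_gauss)"
proof -
  define H where "H u w = ennreal (std_gauss_density u * std_gauss_density w) * G u w" for u w
  have H [measurable]: "(\<lambda>(x, y). H x y) \<in> borel_measurable (borel \<Otimes>\<^sub>M borel)"
    unfolding H_def by measurable
  have "(\<integral>\<^sup>+x. \<integral>\<^sup>+y. G (c *\<^sub>R x + s *\<^sub>R y) (s *\<^sub>R x - c *\<^sub>R y) \<partial>std_gauss \<partial>std_gauss)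
      = (\<integral>\<^sup>+x. \<integral>\<^sup>+y. ennreal (std_gauss_density x * std_gauss_density y)
            * G (c *\<^sub>R x + s *\<^sub>R y) (s *\<^sub>R x - c *\<^sub>R y) \<partial>lborel \<partial>lborel)"
    by (rule nn_integral_std_gauss_pair) measurable
  also have "\<dots> = (\<integral>\<^sup>+x. \<integral>\<^sup>+y. H (c *\<^sub>R x - s *\<^sub>R (- y)) (s *\<^sub>R x + c *\<^sub>R (- y)) \<partial>lborel \<partial>lborel)"
    by (simp add: H_def std_gauss_density_reflection[OF cs])
  also have "\<dots> = (\<integral>\<^sup>+x. \<integral>\<^sup>+y. H (c *\<^sub>R x - s *\<^sub>R y) (s *\<^sub>R x + c *\<^sub>R y) \<partial>lborel \<partial>lborel)"
  proof (rule nn_integral_cong)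
    fix x :: 'a
    show "(\<integral>\<^sup>+y. H (c *\<^sub>R x - s *\<^sub>R (- y)) (s *\<^sub>R x + c *\<^sub>R (- y)) \<partial>lborel)
        = (\<integral>\<^sup>+y. H (c *\<^sub>R x - s *\<^sub>R y) (s *\<^sub>R x + c *\<^sub>R y) \<partial>lborel)"
      by (rule nn_integral_lborel_uminus[of "\<lambda>y. H (c *\<^sub>R x - s *\<^sub>R y) (s *\<^sub>R x + c *\<^sub>R y)"])
        measurable
  qed
  also have "\<dots> = (\<integral>\<^sup>+x. \<integral>\<^sup>+y. H x y \<partial>lborel \<partial>lborel)"
    by (rule nn_integral_lborel_rotation[OF H cs])
  also have "\<dots> = (\<integral>\<^sup>+x. \<integral>\<^sup>+y. G x y \<partial>std_gauss \<partial>std_gauss)"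
    unfolding H_def by (rule nn_integral_std_gauss_pair[symmetric]) measurable
  finally show ?thesis .
qed

lemma nn_integral_std_gauss_lborel_swap:
  fixes F :: "'a::euclidean_space \<Rightarrow> real \<Rightarrow> ennreal"
  assumes "(\<lambda>(y, \<theta>). F y \<theta>) \<in> borel_measurable (std_gauss \<Otimes>\<^sub>M lborel)"
  shows "(\<integral>\<^sup>+y. \<integral>\<^sup>+\<theta>. F y \<theta> \<partial>lborel \<partial>std_gauss) = (\<integral>\<^sup>+\<theta>. \<integral>\<^sup>+y. F y \<theta> \<partial>std_gauss \<partial>lborel)"
proof -
  have "pair_sigma_finite (std_gauss :: 'a measure) (lborel :: real measure)"
    unfolding pair_sigma_finite_def
    using prob_space_imp_sigma_finite[OF prob_space_std_gauss] lborel.sigma_finite_measure_axioms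
    by simp
  from pair_sigma_finite.Fubini'[OF this assms] show ?thesis
    by simp
qed

section \<open>Maurey--Pisier interpolation\<close>

definition interp_point :: "real \<Rightarrow> 'a::real_vector \<Rightarrow> 'a \<Rightarrow> 'a" where
  "interp_point \<theta> x y = sin \<theta> *\<^sub>R x + cos \<theta> *\<^sub>R y"

definition interp_velocity :: "real \<Rightarrow> 'a::real_vector \<Rightarrow> 'a \<Rightarrow> 'a" where
  "interp_velocity \<theta> x y = cos \<theta> *\<^sub>R x - sin \<theta> *\<^sub>R y"

lemma interp_point_0 [simp]: "interp_point 0 x y = y"
  and interp_point_pi_half [simp]: "interp_point (pi / 2) x y = x"
  by (simp_all add: interp_point_def)

lemma has_vector_derivative_interp_point:
  "((\<lambda>\<theta>. interp_point \<theta> x y) has_vector_derivative interp_velocity \<theta> x y) (at \<theta>)"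
  unfolding interp_point_def interp_velocity_def
  by (auto intro!: derivative_eq_intros simp: has_vector_derivative_def fun_eq_iff algebra_simps)

lemma norm_interp_velocity_le: "norm (interp_velocity \<theta> x y) \<le> norm x + norm y"
proof -
  have "norm (interp_velocity \<theta> x y) \<le> \<bar>cos \<theta>\<bar> * norm x + \<bar>sin \<theta>\<bar> * norm y"
    unfolding interp_velocity_def by (rule order_trans[OF norm_triangle_ineq4]) simp
  also have "\<dots> \<le> norm x + norm y"
    by (intro add_mono mult_left_le_one_le) auto
  finally show ?thesis .
qed

lemma measurable_interp_point [measurable (raw)]:
  fixes u v :: "'b \<Rightarrow> 'a::euclidean_space"
  assumes [measurable]: "t \<in> borel_measurable M" "u \<in> borel_measurable M" "v \<in> borel_measurable M"
  shows "(\<lambda>\<omega>. interp_point (t \<omega>) (u \<omega>) (v \<omega>)) \<in> borel_measurable M"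
  unfolding interp_point_def by measurable

lemma measurable_interp_velocity [measurable (raw)]:
  fixes u v :: "'b \<Rightarrow> 'a::euclidean_space"
  assumes [measurable]: "t \<in> borel_measurable M" "u \<in> borel_measurable M" "v \<in> borel_measurable M"
  shows "(\<lambda>\<omega>. interp_velocity (t \<omega>) (u \<omega>) (v \<omega>)) \<in> borel_measurable M"
  unfolding interp_velocity_def by measurable

lemma nn_integral_std_gauss_interp:
  fixes G :: "'a::euclidean_space \<Rightarrow> 'a \<Rightarrow> ennreal"
  assumes "(\<lambda>(x, y). G x y) \<in> borel_measurable (borel \<Otimes>\<^sub>M borel)"
  shows "(\<integral>\<^sup>+x. \<integral>\<^sup>+y. G (interp_point \<theta> x y) (interp_velocity \<theta> x y) \<partial>std_gauss \<partial>std_gauss)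
       = (\<integral>\<^sup>+x. \<integral>\<^sup>+y. G x y \<partial>std_gauss \<partial>std_gauss)"
  unfolding interp_point_def interp_velocity_def
  by (rule nn_integral_std_gauss_reflection[OF assms]) simp

lemma nn_integral_interp_average:
  fixes G :: "'a::euclidean_space \<Rightarrow> 'a \<Rightarrow> ennreal"
  assumes G [measurable]: "(\<lambda>(x, y). G x y) \<in> borel_measurable (borel \<Otimes>\<^sub>M borel)"
  shows "(\<integral>\<^sup>+x. \<integral>\<^sup>+y. (\<integral>\<^sup>+\<theta>\<in>{0..pi/2}. G (interp_point \<theta> x y) (interp_velocity \<theta> x y) \<partial>lborel)
            \<partial>std_gauss \<partial>std_gauss)
       = ennreal (pi / 2) * (\<integral>\<^sup>+x. \<integral>\<^sup>+y. G x y \<partial>std_gauss \<partial>std_gauss)"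
proof -
  define F where "F \<theta> x y = G (interp_point \<theta> x y) (interp_velocity \<theta> x y) * indicator {0..pi/2} \<theta>"
    for \<theta> x y
  have [measurable]: "(\<lambda>(y, \<theta>). F \<theta> x y) \<in> borel_measurable (std_gauss \<Otimes>\<^sub>M lborel)" for x
    unfolding F_def by measurable
  have [measurable]: "(\<lambda>(x, \<theta>). \<integral>\<^sup>+y. F \<theta> x y \<partial>std_gauss) \<in> borel_measurable (std_gauss \<Otimes>\<^sub>M lborel)"
    unfolding F_def by measurable
  have "(\<integral>\<^sup>+x. \<integral>\<^sup>+y. \<integral>\<^sup>+\<theta>. F \<theta> x y \<partial>lborel \<partial>std_gauss \<partial>std_gauss)
      = (\<integral>\<^sup>+x. \<integral>\<^sup>+\<theta>. \<integral>\<^sup>+y. F \<theta> x y \<partial>std_gauss \<partial>lborel \<partial>std_gauss)"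
    by (intro nn_integral_cong nn_integral_std_gauss_lborel_swap) measurable
  also have "\<dots> = (\<integral>\<^sup>+\<theta>. \<integral>\<^sup>+x. \<integral>\<^sup>+y. F \<theta> x y \<partial>std_gauss \<partial>std_gauss \<partial>lborel)"
    by (rule nn_integral_std_gauss_lborel_swap) measurable
  also have "\<dots> = (\<integral>\<^sup>+\<theta>. (\<integral>\<^sup>+x. \<integral>\<^sup>+y. G x y \<partial>std_gauss \<partial>std_gauss) * indicator {0..pi/2} \<theta> \<partial>lborel)"
    by (intro nn_integral_cong)
      (simp add: F_def nn_integral_multc nn_integral_std_gauss_interp[OF G] split: split_indicator)
  also have "\<dots> = ennreal (pi / 2) * (\<integral>\<^sup>+x. \<integral>\<^sup>+y. G x y \<partial>std_gauss \<partial>std_gauss)"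
    by (simp add: nn_integral_cmult_indicator mult.commute)
  finally show ?thesis
    by (simp add: F_def)
qed

definition mp_integral :: "('a::euclidean_space \<Rightarrow> 'a) \<Rightarrow> 'a \<Rightarrow> 'a \<Rightarrow> real" where
  "mp_integral g x y = (LINT \<theta>:{0..pi/2}|lborel. g (interp_point \<theta> x y) \<bullet> interp_velocity \<theta> x y)"

lemma measurable_mp_integral [measurable (raw)]:
  assumes [measurable]: "g \<in> borel_measurable borel" "u \<in> borel_measurable M" "v \<in> borel_measurable M"
  shows "(\<lambda>\<omega>. mp_integral g (u \<omega>) (v \<omega>)) \<in> borel_measurable M"
  unfolding mp_integral_def set_lebesgue_integral_def by measurable

lemma abs_mp_integrand_le:
  assumes "\<And>z. norm (g z) \<le> K"
  shows "\<bar>g (interp_point \<theta> x y) \<bullet> interp_velocity \<theta> x y\<bar> \<le> K * (norm x + norm y)"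
proof -
  have "\<bar>g (interp_point \<theta> x y) \<bullet> interp_velocity \<theta> x y\<bar>
      \<le> norm (g (interp_point \<theta> x y)) * norm (interp_velocity \<theta> x y)"
    by (rule Cauchy_Schwarz_ineq2)
  also have "\<dots> \<le> K * (norm x + norm y)"
    using assms order_trans[OF norm_ge_zero assms] by (intro mult_mono norm_interp_velocity_le) auto
  finally show ?thesis .
qed

lemma set_integrable_mp_integrand:
  fixes g :: "'a::euclidean_space \<Rightarrow> 'a"
  assumes [measurable]: "g \<in> borel_measurable borel" and bound: "\<And>z. norm (g z) \<le> K"
  shows "set_integrable lborel {0..pi/2} (\<lambda>\<theta>. g (interp_point \<theta> x y) \<bullet> interp_velocity \<theta> x y)"
  unfolding set_integrable_def
proof (rule integrableI_bounded_set_indicator[where B = "K * (norm x + norm y)"])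
  show "(\<lambda>\<theta>. g (interp_point \<theta> x y) \<bullet> interp_velocity \<theta> x y) \<in> borel_measurable lborel"
    by measurable
  show "AE \<theta> in lborel. \<theta> \<in> {0..pi/2} \<longrightarrow> norm (g (interp_point \<theta> x y) \<bullet> interp_velocity \<theta> x y)
      \<le> K * (norm x + norm y)"
    using abs_mp_integrand_le[of g K, OF bound] by simp
qed auto

lemma abs_mp_integral_le:
  assumes [measurable]: "g \<in> borel_measurable borel" and bound: "\<And>z. norm (g z) \<le> K"
  shows "\<bar>mp_integral g x y\<bar> \<le> pi / 2 * (K * (norm x + norm y))"
proof -
  let ?C = "K * (norm x + norm y)"
  have const: "set_integrable lborel {0..pi/2} (\<lambda>_. ?C)"
    unfolding set_integrable_def by (intro integrable_scaleR_left integrable_real_indicator) auto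
  have "\<bar>mp_integral g x y\<bar>
      \<le> (LINT \<theta>:{0..pi/2}|lborel. norm (g (interp_point \<theta> x y) \<bullet> interp_velocity \<theta> x y))"
    unfolding mp_integral_def using set_integral_norm_bound[OF set_integrable_mp_integrand[OF assms]]
    by simp
  also have "\<dots> \<le> (LINT \<theta>:{0..pi/2}|lborel. ?C)"
    using abs_mp_integrand_le[of g K, OF bound]
    by (intro set_integral_mono set_integrable_norm set_integrable_mp_integrand[OF assms] const) simp
  also have "\<dots> = pi / 2 * ?C"
    by (simp add: set_integral_const)
  finally show ?thesis .
qed

lemma mp_integral_grad:
  fixes f :: "'a::euclidean_space \<Rightarrow> real"
  assumes diff: "\<And>z. f differentiable (at z)"
    and int: "set_integrable lborel {0..pi/2} (\<lambda>\<theta>. grad f (interp_point \<theta> x y) \<bullet> interp_velocity \<theta> x y)"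
  shows "mp_integral (grad f) x y = f x - f y"
proof -
  have "((\<lambda>\<theta>. grad f (interp_point \<theta> x y) \<bullet> interp_velocity \<theta> x y)
      has_integral f (interp_point (pi / 2) x y) - f (interp_point 0 x y)) {0..pi/2}"
  proof (rule fundamental_theorem_of_calculus)
    fix \<theta> :: real
    have "((\<lambda>\<theta>. f (interp_point \<theta> x y))
        has_derivative (\<lambda>h. grad f (interp_point \<theta> x y) \<bullet> (h *\<^sub>R interp_velocity \<theta> x y))) (at \<theta>)"
      using has_vector_derivative_interp_point has_derivative_grad[OF diff]
      unfolding has_vector_derivative_def by (rule has_derivative_compose)
    then show "((\<lambda>\<theta>. f (interp_point \<theta> x y))
        has_vector_derivative grad f (interp_point \<theta> x y) \<bullet> interp_velocity \<theta> x y) (at \<theta> within {0..pi/2})"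
      by (auto simp: has_vector_derivative_def algebra_simps intro: has_derivative_at_withinI)
  qed simp
  then show ?thesis
    unfolding mp_integral_def set_borel_integral_eq_integral(2)[OF int]
    by (simp add: integral_unique)
qed

lemma mp_integral_remainder_le:
  fixes f :: "'a::euclidean_space \<Rightarrow> real"
  assumes diff: "\<And>z. f differentiable (at z)"
    and grad_split: "\<And>z. grad f z = g z + h z"
    and [measurable]: "g \<in> borel_measurable borel" "h \<in> borel_measurable borel"
    and bound: "\<And>z. norm (g z) \<le> K"
  shows "ennreal \<bar>f x - f y - mp_integral g x y\<bar>
    \<le> (\<integral>\<^sup>+\<theta>\<in>{0..pi/2}. ennreal \<bar>h (interp_point \<theta> x y) \<bullet> interp_velocity \<theta> x y\<bar> \<partial>lborel)"
    (is "_ \<le> ?R")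
proof (cases "?R = \<infinity>")
  case False
  let ?h = "\<lambda>\<theta>. h (interp_point \<theta> x y) \<bullet> interp_velocity \<theta> x y"
  have norm_h: "(\<integral>\<^sup>+\<theta>. ennreal (norm (indicator {0..pi/2} \<theta> *\<^sub>R ?h \<theta>)) \<partial>lborel) = ?R"
    by (intro nn_integral_cong) (simp split: split_indicator)
  have int_h: "set_integrable lborel {0..pi/2} ?h"
    unfolding set_integrable_def
    by (rule integrableI_bounded) (use False norm_h in \<open>auto simp: top.not_eq_extremum\<close>)
  have int_g: "set_integrable lborel {0..pi/2} (\<lambda>\<theta>. g (interp_point \<theta> x y) \<bullet> interp_velocity \<theta> x y)"
    using assms(3) bound by (rule set_integrable_mp_integrand)
  have "f x - f y = mp_integral (grad f) x y"
    using int_g int_h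
    by (intro mp_integral_grad[OF diff, symmetric]) (simp add: grad_split inner_add_left)
  also have "\<dots> = mp_integral g x y + (LINT \<theta>:{0..pi/2}|lborel. ?h \<theta>)"
    unfolding mp_integral_def grad_split inner_add_left by (rule set_integral_add(2)[OF int_g int_h])
  finally have "f x - f y - mp_integral g x y = (LINT \<theta>:{0..pi/2}|lborel. ?h \<theta>)"
    by simp
  then show ?thesis
    using integral_norm_bound_ennreal[OF int_h[unfolded set_integrable_def]] norm_h
    by (simp add: set_lebesgue_integral_def)
qed simp

lemma exp_mp_integral_le:
  fixes g :: "'a::euclidean_space \<Rightarrow> 'a"
  assumes [measurable]: "g \<in> borel_measurable borel" and bound: "\<And>z. norm (g z) \<le> K"
  shows "ennreal (exp (\<alpha> * mp_integral g x y))
    \<le> ennreal (2 / pi)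
      * (\<integral>\<^sup>+\<theta>\<in>{0..pi/2}. ennreal
        (exp (pi / 2 * \<alpha> * (g (interp_point \<theta> x y) \<bullet> interp_velocity \<theta> x y))) \<partial>lborel)"
    (is "_ \<le> _ * ?I")
proof -
  let ?D = "\<lambda>\<theta>. pi / 2 * \<alpha> * (g (interp_point \<theta> x y) \<bullet> interp_velocity \<theta> x y)"
  have "ennreal (pi / 2 * exp ((LINT \<theta>:{0..pi/2}|lborel. ?D \<theta>) / (pi / 2))) \<le> ?I"
    using exp_set_average_le[of ?D lborel "{0..pi/2}"] set_integrable_mp_integrand[OF assms]
    by simp
  also have "(LINT \<theta>:{0..pi/2}|lborel. ?D \<theta>) / (pi / 2) = \<alpha> * mp_integral g x y"
    by (simp add: mp_integral_def)
  finally have average: "ennreal (pi / 2 * exp (\<alpha> * mp_integral g x y)) \<le> ?I" .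
  have "ennreal (exp (\<alpha> * mp_integral g x y))
      = ennreal (2 / pi) * ennreal (pi / 2 * exp (\<alpha> * mp_integral g x y))"
    by (simp add: ennreal_mult[symmetric])
  also have "\<dots> \<le> ennreal (2 / pi) * ?I"
    by (rule mult_left_mono[OF average]) simp
  finally show ?thesis .
qed

lemma nn_integral_exp_mp_integral_le:
  fixes g :: "'a::euclidean_space \<Rightarrow> 'a"
  assumes [measurable]: "g \<in> borel_measurable borel" and bound: "\<And>z. norm (g z) \<le> K"
  shows "(\<integral>\<^sup>+x. \<integral>\<^sup>+y. ennreal (exp (\<alpha> * mp_integral g x y)) \<partial>std_gauss \<partial>std_gauss)
    \<le> ennreal (exp (\<alpha>\<^sup>2 * pi\<^sup>2 * K\<^sup>2 / 8))"
proof -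
  define k where "k = pi / 2 * \<alpha>"
  have mgf: "(\<integral>\<^sup>+y. ennreal (exp (k * (g x \<bullet> y))) \<partial>std_gauss) \<le> ennreal (exp (k\<^sup>2 * K\<^sup>2 / 2))" for x
  proof -
    have "(norm (k *\<^sub>R g x))\<^sup>2 \<le> k\<^sup>2 * K\<^sup>2"
      using bound[of x] by (simp add: power_mult_distrib mult_left_mono power_mono)
    then show ?thesis
      using nn_integral_exp_inner_std_gauss[of "k *\<^sub>R g x"] by (simp add: ennreal_leI)
  qed
  have meas_exp: "(\<lambda>(u, w). ennreal (exp (k * (g u \<bullet> w)))) \<in> borel_measurable (borel \<Otimes>\<^sub>M borel)"
    by measurable
  have "(\<integral>\<^sup>+x. \<integral>\<^sup>+y. ennreal (exp (\<alpha> * mp_integral g x y)) \<partial>std_gauss \<partial>std_gauss)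
      \<le> (\<integral>\<^sup>+x. \<integral>\<^sup>+y. ennreal (2 / pi) *
            (\<integral>\<^sup>+\<theta>\<in>{0..pi/2}. ennreal (exp (k * (g (interp_point \<theta> x y) \<bullet> interp_velocity \<theta> x y))) \<partial>lborel)
          \<partial>std_gauss \<partial>std_gauss)"
    using exp_mp_integral_le[OF assms, of \<alpha>] by (intro nn_integral_mono) (simp add: k_def)
  also have "\<dots> = ennreal (2 / pi) *
      (\<integral>\<^sup>+x. \<integral>\<^sup>+y.
          (\<integral>\<^sup>+\<theta>\<in>{0..pi/2}. ennreal (exp (k * (g (interp_point \<theta> x y) \<bullet> interp_velocity \<theta> x y))) \<partial>lborel)
        \<partial>std_gauss \<partial>std_gauss)"
    by (simp add: nn_integral_cmult)
  also have "\<dots> = ennreal (2 / pi) *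
      (ennreal (pi / 2) * (\<integral>\<^sup>+x. \<integral>\<^sup>+y. ennreal (exp (k * (g x \<bullet> y))) \<partial>std_gauss \<partial>std_gauss))"
    by (simp only: nn_integral_interp_average[OF meas_exp])
  also have "\<dots> = (\<integral>\<^sup>+x. \<integral>\<^sup>+y. ennreal (exp (k * (g x \<bullet> y))) \<partial>std_gauss \<partial>std_gauss)"
    by (simp add: mult.assoc[symmetric] ennreal_mult[symmetric])
  also have "\<dots> \<le> (\<integral>\<^sup>+x. ennreal (exp (k\<^sup>2 * K\<^sup>2 / 2)) \<partial>(std_gauss :: 'a measure))"
    by (intro nn_integral_mono mgf)
  also have "\<dots> = ennreal (exp (\<alpha>\<^sup>2 * pi\<^sup>2 * K\<^sup>2 / 8))"
    by (simp add: k_def power_mult_distrib power_divide)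
  finally show ?thesis .
qed

lemma nn_integral_abs_mp_remainder_le:
  fixes f :: "'a::euclidean_space \<Rightarrow> real"
  assumes diff: "\<And>z. f differentiable (at z)"
    and grad_split: "\<And>z. grad f z = g z + h z"
    and [measurable]: "g \<in> borel_measurable borel" "h \<in> borel_measurable borel"
    and bound: "\<And>z. norm (g z) \<le> K"
  shows "(\<integral>\<^sup>+x. \<integral>\<^sup>+y. ennreal \<bar>f x - f y - mp_integral g x y\<bar> \<partial>std_gauss \<partial>std_gauss)
    \<le> ennreal (pi / 2) * (\<integral>\<^sup>+x. ennreal (norm (h x)) \<partial>std_gauss)"
proof -
  have "(\<integral>\<^sup>+x. \<integral>\<^sup>+y. ennreal \<bar>f x - f y - mp_integral g x y\<bar> \<partial>std_gauss \<partial>std_gauss)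
      \<le> (\<integral>\<^sup>+x. \<integral>\<^sup>+y. (\<integral>\<^sup>+\<theta>\<in>{0..pi/2}. ennreal \<bar>h (interp_point \<theta> x y) \<bullet> interp_velocity \<theta> x y\<bar> \<partial>lborel)
          \<partial>std_gauss \<partial>std_gauss)"
    by (intro nn_integral_mono mp_integral_remainder_le[OF diff grad_split assms(3,4) bound])
  also have "\<dots> = ennreal (pi / 2) * (\<integral>\<^sup>+x. \<integral>\<^sup>+y. ennreal \<bar>h x \<bullet> y\<bar> \<partial>std_gauss \<partial>std_gauss)"
    by (rule nn_integral_interp_average[where G = "\<lambda>u w. ennreal \<bar>h u \<bullet> w\<bar>"]) measurable
  also have "\<dots> \<le> ennreal (pi / 2) * (\<integral>\<^sup>+x. ennreal (norm (h x)) \<partial>std_gauss)"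
    by (intro mult_left_mono nn_integral_mono nn_integral_abs_inner_std_gauss_le) simp
  finally show ?thesis .
qed

lemma integrable_mp_integral:
  fixes g :: "'a::euclidean_space \<Rightarrow> 'a"
  assumes [measurable]: "g \<in> borel_measurable borel" and bound: "\<And>z. norm (g z) \<le> K"
  shows "integrable std_gauss (\<lambda>y. mp_integral g x y)"
proof (rule Bochner_Integration.integrable_bound)
  show "integrable std_gauss (\<lambda>y. pi / 2 * (K * (norm x + norm y)))"
    by (intro integrable_mult_right Bochner_Integration.integrable_add integrable_norm_std_gauss) simp
  show "AE y in std_gauss. norm (mp_integral g x y) \<le> norm (pi / 2 * (K * (norm x + norm y)))"
    using abs_mp_integral_le[of g K, OF _ bound] by (auto intro!: AE_I2 order_trans[OF _ abs_ge_self])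
qed measurable

lemma min_one_exp_le_interpolation:
  fixes f :: "'a::euclidean_space \<Rightarrow> real"
  assumes int_f: "integrable std_gauss f"
    and [measurable]: "g \<in> borel_measurable borel" and bound: "\<And>z. norm (g z) \<le> K"
    and \<alpha>: "0 < \<alpha>" and s: "0 \<le> s"
  shows "ennreal (min 1 (exp (\<alpha> * (f x - (\<integral>y. f y \<partial>std_gauss) - t))))
    \<le> ennreal (exp (\<alpha> * (s - t))) * (\<integral>\<^sup>+y. ennreal (exp (\<alpha> * mp_integral g x y)) \<partial>std_gauss)
      + ennreal (1 / (s + 1 / \<alpha>)) * (\<integral>\<^sup>+y. ennreal \<bar>f x - f y - mp_integral g x y\<bar> \<partial>std_gauss)"
proof -
  define A where "A = (\<integral>y. mp_integral g x y \<partial>std_gauss)"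
  define B where "B = (\<integral>y. f x - f y - mp_integral g x y \<partial>std_gauss)"
  have int_mp: "integrable std_gauss (\<lambda>y. mp_integral g x y)"
    using assms(2) bound by (rule integrable_mp_integral)
  have c: "0 < s + 1 / \<alpha>"
    using \<alpha> s by (simp add: add_nonneg_pos)
  have "f x - (\<integral>y. f y \<partial>std_gauss) = A + B"
    using int_f int_mp by (simp add: A_def B_def)
  then have "min 1 (exp (\<alpha> * (f x - (\<integral>y. f y \<partial>std_gauss) - t)))
      \<le> exp (\<alpha> * (A + s - t)) + \<bar>B\<bar> / (s + 1 / \<alpha>)"
    using min_one_exp_le[OF \<alpha> s, of A B t] by simp
  also have "\<dots> = exp (\<alpha> * (s - t)) * exp (\<alpha> * A) + 1 / (s + 1 / \<alpha>) * \<bar>B\<bar>"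
    by (simp add: algebra_simps flip: exp_add)
  finally have "ennreal (min 1 (exp (\<alpha> * (f x - (\<integral>y. f y \<partial>std_gauss) - t))))
      \<le> ennreal (exp (\<alpha> * (s - t))) * ennreal (exp (\<alpha> * A)) + ennreal (1 / (s + 1 / \<alpha>)) * ennreal \<bar>B\<bar>"
    using c by (simp add: ennreal_mult'[symmetric] ennreal_plus[symmetric] del: ennreal_plus)
  also have "\<dots> \<le> ennreal (exp (\<alpha> * (s - t))) * (\<integral>\<^sup>+y. ennreal (exp (\<alpha> * mp_integral g x y)) \<partial>std_gauss)
      + ennreal (1 / (s + 1 / \<alpha>)) * (\<integral>\<^sup>+y. ennreal \<bar>f x - f y - mp_integral g x y\<bar> \<partial>std_gauss)"
  proof (intro add_mono mult_left_mono)
    show "ennreal (exp (\<alpha> * A)) \<le> (\<integral>\<^sup>+y. ennreal (exp (\<alpha> * mp_integral g x y)) \<partial>std_gauss)"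
      using std_gauss.exp_expectation_le[of "\<lambda>y. \<alpha> * mp_integral g x y"] int_mp by (simp add: A_def)
    show "ennreal \<bar>B\<bar> \<le> (\<integral>\<^sup>+y. ennreal \<bar>f x - f y - mp_integral g x y\<bar> \<partial>std_gauss)"
      using integral_norm_bound_ennreal[of std_gauss "\<lambda>y. f x - f y - mp_integral g x y"] int_f int_mp
      by (simp add: B_def)
  qed simp_all
  finally show ?thesis .
qed

lemma nn_integral_min_one_exp_le:
  fixes f :: "'a::euclidean_space \<Rightarrow> real"
  assumes diff: "\<And>z. f differentiable (at z)" and int_f: "integrable std_gauss f"
    and grad_split: "\<And>z. grad f z = g z + h z"
    and [measurable]: "g \<in> borel_measurable borel" "h \<in> borel_measurable borel"
    and bound: "\<And>z. norm (g z) \<le> K" and \<alpha>: "0 < \<alpha>" and s: "0 \<le> s"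
  shows "(\<integral>\<^sup>+x. ennreal (min 1 (exp (\<alpha> * (f x - (\<integral>y. f y \<partial>std_gauss) - t)))) \<partial>std_gauss)
    \<le> ennreal (exp (\<alpha>\<^sup>2 * pi\<^sup>2 * K\<^sup>2 / 8 + \<alpha> * (s - t)))
      + ennreal (pi / (2 * (s + 1 / \<alpha>))) * (\<integral>\<^sup>+x. ennreal (norm (h x)) \<partial>std_gauss)"
proof -
  define c where "c = s + 1 / \<alpha>"
  define E where "E x = (\<integral>\<^sup>+y. ennreal (exp (\<alpha> * mp_integral g x y)) \<partial>std_gauss)" for x
  define R where "R x = (\<integral>\<^sup>+y. ennreal \<bar>f x - f y - mp_integral g x y\<bar> \<partial>std_gauss)" for x
  have c: "0 < c"
    using \<alpha> s by (simp add: c_def add_nonneg_pos)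
  have [measurable]: "f \<in> borel_measurable borel"
    using diff by (rule borel_measurable_differentiable)
  have "(\<integral>\<^sup>+x. ennreal (min 1 (exp (\<alpha> * (f x - (\<integral>y. f y \<partial>std_gauss) - t)))) \<partial>std_gauss)
      \<le> (\<integral>\<^sup>+x. ennreal (exp (\<alpha> * (s - t))) * E x + ennreal (1 / c) * R x \<partial>std_gauss)"
    unfolding E_def R_def c_def
    by (intro nn_integral_mono min_one_exp_le_interpolation[OF int_f assms(4) bound \<alpha> s])
  also have "\<dots> = ennreal (exp (\<alpha> * (s - t))) * (\<integral>\<^sup>+x. E x \<partial>std_gauss)
      + ennreal (1 / c) * (\<integral>\<^sup>+x. R x \<partial>std_gauss)"
    unfolding E_def R_def by (simp add: nn_integral_add nn_integral_cmult)
  also have "\<dots> \<le> ennreal (exp (\<alpha> * (s - t))) * ennreal (exp (\<alpha>\<^sup>2 * pi\<^sup>2 * K\<^sup>2 / 8))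
      + ennreal (1 / c) * (ennreal (pi / 2) * (\<integral>\<^sup>+x. ennreal (norm (h x)) \<partial>std_gauss))"
    unfolding E_def R_def
    by (intro add_mono mult_left_mono nn_integral_exp_mp_integral_le[OF _ bound]
        nn_integral_abs_mp_remainder_le[OF diff grad_split _ _ bound]) simp_all
  also have "\<dots> = ennreal (exp (\<alpha>\<^sup>2 * pi\<^sup>2 * K\<^sup>2 / 8 + \<alpha> * (s - t)))
      + ennreal (pi / (2 * (s + 1 / \<alpha>))) * (\<integral>\<^sup>+x. ennreal (norm (h x)) \<partial>std_gauss)"
  proof -
    have "exp (\<alpha> * (s - t)) * exp (\<alpha>\<^sup>2 * pi\<^sup>2 * K\<^sup>2 / 8) = exp (\<alpha>\<^sup>2 * pi\<^sup>2 * K\<^sup>2 / 8 + \<alpha> * (s - t))"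
      by (simp add: exp_add)
    moreover have "1 / c * (pi / 2) = pi / (2 * (s + 1 / \<alpha>))"
      by (simp add: c_def)
    ultimately show ?thesis
      using c by (simp add: ennreal_mult'[symmetric] mult.assoc[symmetric] del: ennreal_mult')
  qed
  finally show ?thesis .
qed

section \<open>Concentration bounds\<close>

text \<open>
  The bound produced by the interpolation argument at truncation level \<open>L\<close>, with a free
  parameter \<open>s \<ge> 0\<close>: \<open>s = 0\<close> gives \<open>Delta\<close>, and \<open>s = t / 4\<close> the explicit bound.
\<close>

definition tail_bound :: "('a::euclidean_space \<Rightarrow> real) \<Rightarrow> real \<Rightarrow> real \<Rightarrow> real \<Rightarrow> real \<Rightarrow> real" where
  "tail_bound f L \<alpha> s t = exp (\<alpha>\<^sup>2 * pi\<^sup>2 * L / 8 + \<alpha> * (s - t))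
     + pi / (2 * (s + 1 / \<alpha>)) * sqrt (Psi f L * (\<integral>x. (norm (grad f x))\<^sup>2 \<partial>std_gauss))"

lemma Psi_nonneg: "0 \<le> Psi f L"
  by (simp add: Psi_def)

lemma tail_bound_nonneg: "0 \<le> \<alpha> \<Longrightarrow> 0 \<le> s \<Longrightarrow> 0 \<le> tail_bound f L \<alpha> s t"
  unfolding tail_bound_def
  by (intro add_nonneg_nonneg mult_nonneg_nonneg real_sqrt_ge_zero Psi_nonneg integral_nonneg_AE) auto

lemma tail_bound_le_Delta:
  assumes "0 < L"
  shows "tail_bound f L \<alpha> 0 t \<le> Delta f L \<alpha> t"
proof -
  have "0 \<le> \<alpha>\<^sup>2 * pi\<^sup>2 * L"
    using assms by simp
  moreover have "\<alpha>\<^sup>2 * pi\<^sup>2 * L / 4 - \<alpha> * t = (\<alpha>\<^sup>2 * pi\<^sup>2 * L / 8 + \<alpha> * (0 - t)) + \<alpha>\<^sup>2 * pi\<^sup>2 * L / 8"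
    by (simp add: field_simps)
  ultimately have "exp (\<alpha>\<^sup>2 * pi\<^sup>2 * L / 8 + \<alpha> * (0 - t)) \<le> exp (\<alpha>\<^sup>2 * pi\<^sup>2 * L / 4 - \<alpha> * t)"
    by (intro exp_mono) linarith
  moreover have weight: "pi / (2 * (0 + 1 / \<alpha>)) = pi * \<alpha> / 2"
    by simp
  ultimately show ?thesis
    using Psi_nonneg[of f L] unfolding tail_bound_def Delta_def weight by linarith
qed

lemma tail_bound_le_explicit:
  fixes f :: "'a::euclidean_space \<Rightarrow> real"
  assumes L: "0 < L" and t: "0 < t"
  shows "tail_bound f L (3 * t / (pi\<^sup>2 * L)) (t / 4) t
    \<le> exp (- t\<^sup>2 / (pi\<^sup>2 * L))
      + (1 + L powr (-1/2)) * sqrt ((1 / L) * (\<integral>x. (norm (grad f x))\<^sup>2 \<partial>std_gauss) * Psi f L)"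
proof -
  \<comment> \<open>this \<open>\<alpha>\<close> makes the exponent \<open>-9 t\<^sup>2 / (8 pi\<^sup>2 L)\<close>, and by AM-GM the weight of the
    square root is then at most \<open>1 / sqrt L\<close>\<close>
  define \<alpha> where "\<alpha> = 3 * t / (pi\<^sup>2 * L)"
  define S where "S = sqrt (Psi f L * (\<integral>x. (norm (grad f x))\<^sup>2 \<partial>std_gauss))"
  have E: "0 \<le> (\<integral>x. (norm (grad f x))\<^sup>2 \<partial>std_gauss)"
    by (simp add: integral_nonneg_AE)
  have S: "0 \<le> S"
    using Psi_nonneg[of f L] E by (simp add: S_def)
  have "\<alpha>\<^sup>2 * pi\<^sup>2 * L / 8 + \<alpha> * (t / 4 - t) = - 9 * t\<^sup>2 / (8 * pi\<^sup>2 * L)"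
    using L by (simp add: \<alpha>_def power2_eq_square field_simps)
  also have "\<dots> \<le> - t\<^sup>2 / (pi\<^sup>2 * L)"
    using L by (simp add: field_simps)
  finally have exp_part: "exp (\<alpha>\<^sup>2 * pi\<^sup>2 * L / 8 + \<alpha> * (t / 4 - t)) \<le> exp (- t\<^sup>2 / (pi\<^sup>2 * L))"
    by simp
  have amgm: "pi / 2 * sqrt L \<le> t / 4 + pi\<^sup>2 * L / (3 * t)"
  proof -
    have "0 \<le> 3 * (t - pi * sqrt L)\<^sup>2 + pi\<^sup>2 * L"
      using L by (intro add_nonneg_nonneg mult_nonneg_nonneg) simp_all
    also have "\<dots> = 3 * t\<^sup>2 - 6 * pi * t * sqrt L + 4 * pi\<^sup>2 * L"
      using L by (simp add: power2_diff power_mult_distrib algebra_simps)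
    finally show ?thesis
      using t by (simp add: field_simps power2_eq_square)
  qed
  have "pi / (2 * (t / 4 + 1 / \<alpha>)) * S \<le> S / sqrt L"
  proof -
    have "0 < t / 4 + pi\<^sup>2 * L / (3 * t)"
      using t L by (simp add: add_pos_pos)
    moreover have "pi / 2 * S * sqrt L \<le> S * (t / 4 + pi\<^sup>2 * L / (3 * t))"
      using mult_left_mono[OF amgm S] by (simp add: mult_ac)
    ultimately show ?thesis
      using L by (simp add: \<alpha>_def field_simps)
  qed
  also have "\<dots> = sqrt ((1 / L) * (\<integral>x. (norm (grad f x))\<^sup>2 \<partial>std_gauss) * Psi f L)"
    by (simp add: S_def real_sqrt_divide real_sqrt_mult mult.commute)
  also have "\<dots> \<le> (1 + L powr (-1/2)) * sqrt ((1 / L) * (\<integral>x. (norm (grad f x))\<^sup>2 \<partial>std_gauss) * Psi f L)"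
    using L E Psi_nonneg[of f L] by (simp add: distrib_right)
  finally have "pi / (2 * (t / 4 + 1 / \<alpha>)) * S
      \<le> (1 + L powr (-1/2)) * sqrt ((1 / L) * (\<integral>x. (norm (grad f x))\<^sup>2 \<partial>std_gauss) * Psi f L)" .
  then show ?thesis
    using exp_part unfolding \<alpha>_def[symmetric] tail_bound_def S_def[symmetric] by linarith
qed

lemma nn_integral_min_one_exp_le_tail_bound:
  fixes f :: "'a::euclidean_space \<Rightarrow> real"
  assumes diff: "\<And>z. f differentiable (at z)" and int_f: "integrable std_gauss f"
    and int_grad: "integrable std_gauss (\<lambda>x. (norm (grad f x))\<^sup>2)"
    and L: "0 < L" and \<alpha>: "0 < \<alpha>" and s: "0 \<le> s"
  shows "(\<integral>\<^sup>+x. ennreal (min 1 (exp (\<alpha> * (f x - (\<integral>y. f y \<partial>std_gauss) - t)))) \<partial>std_gauss)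
    \<le> ennreal (tail_bound f L \<alpha> s t)"
proof -
  define G where "G = {x. L < (norm (grad f x))\<^sup>2}"
  define g where "g z = (if z \<in> G then 0 else grad f z)" for z
  define h where "h z = (if z \<in> G then grad f z else 0)" for z
  have [measurable]: "grad f \<in> borel_measurable borel"
    using diff by (rule borel_measurable_grad)
  have [measurable]: "G \<in> sets borel"
    unfolding G_def by measurable
  have meas_g [measurable]: "g \<in> borel_measurable borel"
    unfolding g_def[abs_def] by measurable
  have meas_h [measurable]: "h \<in> borel_measurable borel"
    unfolding h_def[abs_def] by measurable
  have grad_split: "grad f z = g z + h z" for z
    by (simp add: g_def h_def)
  have bound: "norm (g z) \<le> sqrt L" for z
    using L by (auto simp: g_def G_def real_le_rsqrt)
  have "(\<integral>\<^sup>+x. ennreal (norm (h x)) \<partial>std_gauss)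
      = (\<integral>\<^sup>+x. ennreal \<bar>norm (grad f x)\<bar> * indicator G x \<partial>std_gauss)"
    by (intro nn_integral_cong) (simp add: h_def split: split_indicator)
  also have "\<dots> \<le> ennreal (sqrt (Psi f L * (\<integral>x. (norm (grad f x))\<^sup>2 \<partial>std_gauss)))"
    using nn_integral_abs_indicator_le_sqrt[of "\<lambda>x. norm (grad f x)" std_gauss G] int_grad
    by (simp add: Psi_def G_def)
  finally have tail: "(\<integral>\<^sup>+x. ennreal (norm (h x)) \<partial>std_gauss)
      \<le> ennreal (sqrt (Psi f L * (\<integral>x. (norm (grad f x))\<^sup>2 \<partial>std_gauss)))" .
  have "(\<integral>\<^sup>+x. ennreal (min 1 (exp (\<alpha> * (f x - (\<integral>y. f y \<partial>std_gauss) - t)))) \<partial>std_gauss)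
      \<le> ennreal (exp (\<alpha>\<^sup>2 * pi\<^sup>2 * (sqrt L)\<^sup>2 / 8 + \<alpha> * (s - t)))
        + ennreal (pi / (2 * (s + 1 / \<alpha>))) * (\<integral>\<^sup>+x. ennreal (norm (h x)) \<partial>std_gauss)"
    by (rule nn_integral_min_one_exp_le[OF diff int_f grad_split meas_g meas_h bound \<alpha> s])
  also have "\<dots> \<le> ennreal (exp (\<alpha>\<^sup>2 * pi\<^sup>2 * L / 8 + \<alpha> * (s - t)))
        + ennreal (pi / (2 * (s + 1 / \<alpha>))) *
          ennreal (sqrt (Psi f L * (\<integral>x. (norm (grad f x))\<^sup>2 \<partial>std_gauss)))"
    using L by (intro add_mono mult_left_mono tail) simp_all
  also have "\<dots> = ennreal (tail_bound f L \<alpha> s t)"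
  proof -
    have "0 \<le> pi / (2 * (s + 1 / \<alpha>)) * sqrt (Psi f L * (\<integral>x. (norm (grad f x))\<^sup>2 \<partial>std_gauss))"
      using \<alpha> s Psi_nonneg[of f L] by (simp add: integral_nonneg_AE add_nonneg_pos)
    then show ?thesis
      using \<alpha> s by (simp add: tail_bound_def ennreal_mult'[symmetric] ennreal_plus[symmetric]
          add_nonneg_pos
          del: ennreal_plus)
  qed
  finally show ?thesis .
qed

lemma upper_tail_le_tail_bound:
  fixes f :: "'a::euclidean_space \<Rightarrow> real"
  assumes diff: "\<And>z. f differentiable (at z)" and int_f: "integrable std_gauss f"
    and int_grad: "integrable std_gauss (\<lambda>x. (norm (grad f x))\<^sup>2)"
    and L: "0 < L" and \<alpha>: "0 < \<alpha>" and s: "0 \<le> s"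
  shows "measure std_gauss {x. f x - (\<integral>y. f y \<partial>std_gauss) > t} \<le> tail_bound f L \<alpha> s t"
proof -
  define m where "m = (\<integral>y. f y \<partial>std_gauss)"
  have [measurable]: "f \<in> borel_measurable borel"
    using diff by (rule borel_measurable_differentiable)
  have "emeasure std_gauss {x. f x - m > t} = (\<integral>\<^sup>+x. indicator {x. f x - m > t} x \<partial>std_gauss)"
    by simp
  also have "\<dots> \<le> (\<integral>\<^sup>+x. ennreal (min 1 (exp (\<alpha> * (f x - m - t)))) \<partial>std_gauss)"
    using \<alpha> by (intro nn_integral_mono) (auto split: split_indicator)
  also have "\<dots> \<le> ennreal (tail_bound f L \<alpha> s t)"
    unfolding m_def by (rule nn_integral_min_one_exp_le_tail_bound[OF diff int_f int_grad L \<alpha> s])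
  finally show ?thesis
    using tail_bound_nonneg[of \<alpha> s f L t] \<alpha> s
    by (simp add: m_def std_gauss.emeasure_eq_measure)
qed

lemma abs_tail_le_tail_bound:
  fixes f :: "'a::euclidean_space \<Rightarrow> real"
  assumes diff: "\<And>z. f differentiable (at z)" and int_f: "integrable std_gauss f"
    and int_grad: "integrable std_gauss (\<lambda>x. (norm (grad f x))\<^sup>2)"
    and L: "0 < L" and \<alpha>: "0 < \<alpha>" and s: "0 \<le> s"
  shows "measure std_gauss {x. \<bar>f x - (\<integral>y. f y \<partial>std_gauss)\<bar> > t} \<le> 2 * tail_bound f L \<alpha> s t"
proof -
  define m where "m = (\<integral>y. f y \<partial>std_gauss)"
  have [measurable]: "f \<in> borel_measurable borel"
    using diff by (rule borel_measurable_differentiable)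
  have grad_minus: "grad (\<lambda>x. - f x) x = - grad f x" for x
    using diff by (rule grad_uminus)
  have "tail_bound (\<lambda>x. - f x) L \<alpha> s t = tail_bound f L \<alpha> s t"
    by (simp add: tail_bound_def Psi_def grad_minus)
  moreover have "measure std_gauss {x. - f x - (\<integral>y. - f y \<partial>std_gauss) > t}
      \<le> tail_bound (\<lambda>x. - f x) L \<alpha> s t"
    using diff int_f int_grad
    by (intro upper_tail_le_tail_bound L \<alpha> s) (simp_all add: grad_minus)
  moreover have "measure std_gauss {x. f x - m > t} \<le> tail_bound f L \<alpha> s t"
    unfolding m_def by (rule upper_tail_le_tail_bound[OF diff int_f int_grad L \<alpha> s])
  moreover have "measure std_gauss {x. \<bar>f x - m\<bar> > t}
      \<le> measure std_gauss {x. f x - m > t} + measure std_gauss {x. - f x - (\<integral>y. - f y \<partial>std_gauss) > t}"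
  proof -
    have "measure std_gauss {x. \<bar>f x - m\<bar> > t}
        \<le> measure std_gauss ({x. f x - m > t} \<union> {x. - f x - (\<integral>y. - f y \<partial>std_gauss) > t})"
      by (rule std_gauss.finite_measure_mono) (auto simp: m_def)
    also have "\<dots> \<le> measure std_gauss {x. f x - m > t}
        + measure std_gauss {x. - f x - (\<integral>y. - f y \<partial>std_gauss) > t}"
      by (rule measure_Un_le) auto
    finally show ?thesis .
  qed
  ultimately show ?thesis
    by (simp add: m_def)
qed

lemma integral_min_exp_le_Delta:
  fixes f :: "'a::euclidean_space \<Rightarrow> real"
  assumes diff: "\<And>z. f differentiable (at z)" and int_f: "integrable std_gauss f"
    and int_grad: "integrable std_gauss (\<lambda>x. (norm (grad f x))\<^sup>2)"
    and L: "0 < L" and \<alpha>: "0 < \<alpha>"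
  shows "(\<integral>x. min (exp (\<alpha> * (f x - (\<integral>y. f y \<partial>std_gauss)))) (exp (\<alpha> * t)) \<partial>std_gauss)
    \<le> exp (\<alpha> * t) * Delta f L \<alpha> t"
proof -
  define m where "m = (\<integral>y. f y \<partial>std_gauss)"
  define u where "u x = min 1 (exp (\<alpha> * (f x - m - t)))" for x
  have [measurable]: "f \<in> borel_measurable borel"
    using diff by (rule borel_measurable_differentiable)
  have scale: "min (exp (\<alpha> * (f x - m))) (exp (\<alpha> * t)) = exp (\<alpha> * t) * u x" for x
  proof -
    have "exp (\<alpha> * (f x - m)) = exp (\<alpha> * t) * exp (\<alpha> * (f x - m - t))"
      by (simp add: algebra_simps flip: exp_add)
    then show ?thesis
      by (simp add: u_def min_def)
  qed
  have "u \<in> borel_measurable std_gauss"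
    unfolding u_def[abs_def] by measurable
  then have int_u: "integrable std_gauss u"
    by (intro std_gauss.integrable_const_bound[where B = 1]) (auto simp: u_def)
  have "ennreal (\<integral>x. u x \<partial>std_gauss) = (\<integral>\<^sup>+x. ennreal (u x) \<partial>std_gauss)"
    by (intro nn_integral_eq_integral[symmetric] int_u) (auto simp: u_def)
  also have "\<dots> \<le> ennreal (tail_bound f L \<alpha> 0 t)"
    unfolding u_def m_def by (rule nn_integral_min_one_exp_le_tail_bound[OF diff int_f int_grad L \<alpha>]) simp
  finally have "(\<integral>x. u x \<partial>std_gauss) \<le> tail_bound f L \<alpha> 0 t"
    using tail_bound_nonneg[of \<alpha> 0 f L t] \<alpha> by simp
  then have "(\<integral>x. u x \<partial>std_gauss) \<le> Delta f L \<alpha> t"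
    using tail_bound_le_Delta[OF L, of f \<alpha> t] by linarith
  moreover have "(\<integral>x. min (exp (\<alpha> * (f x - m))) (exp (\<alpha> * t)) \<partial>std_gauss)
      = exp (\<alpha> * t) * (\<integral>x. u x \<partial>std_gauss)"
    by (simp add: scale)
  ultimately show ?thesis
    unfolding m_def[symmetric] by simp
qed

lemma abs_tail_le_Delta:
  fixes f :: "'a::euclidean_space \<Rightarrow> real"
  assumes diff: "\<And>z. f differentiable (at z)" and int_f: "integrable std_gauss f"
    and int_grad: "integrable std_gauss (\<lambda>x. (norm (grad f x))\<^sup>2)"
    and L: "0 < L" and \<alpha>: "0 < \<alpha>"
  shows "measure std_gauss {x. \<bar>f x - (\<integral>y. f y \<partial>std_gauss)\<bar> > t} \<le> 2 * Delta f L \<alpha> t"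
proof -
  have "measure std_gauss {x. \<bar>f x - (\<integral>y. f y \<partial>std_gauss)\<bar> > t} \<le> 2 * tail_bound f L \<alpha> 0 t"
    by (rule abs_tail_le_tail_bound[OF diff int_f int_grad L \<alpha> order_refl])
  also have "\<dots> \<le> 2 * Delta f L \<alpha> t"
    using tail_bound_le_Delta[OF L] by simp
  finally show ?thesis .
qed

lemma abs_tail_le_explicit:
  fixes f :: "'a::euclidean_space \<Rightarrow> real"
  assumes diff: "\<And>z. f differentiable (at z)" and int_f: "integrable std_gauss f"
    and int_grad: "integrable std_gauss (\<lambda>x. (norm (grad f x))\<^sup>2)"
    and L: "0 < L" and t: "0 < t"
  shows "measure std_gauss {x. \<bar>f x - (\<integral>y. f y \<partial>std_gauss)\<bar> > t}
    \<le> 2 * exp (- t\<^sup>2 / (pi\<^sup>2 * L))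
      + 2 * (1 + L powr (-1/2)) * sqrt ((1 / L) * (\<integral>x. (norm (grad f x))\<^sup>2 \<partial>std_gauss) * Psi f L)"
proof -
  have "measure std_gauss {x. \<bar>f x - (\<integral>y. f y \<partial>std_gauss)\<bar> > t}
      \<le> 2 * tail_bound f L (3 * t / (pi\<^sup>2 * L)) (t / 4) t"
    using L t by (intro abs_tail_le_tail_bound[OF diff int_f int_grad]) simp_all
  also have "\<dots> \<le> 2 * (exp (- t\<^sup>2 / (pi\<^sup>2 * L))
      + (1 + L powr (-1/2)) * sqrt ((1 / L) * (\<integral>x. (norm (grad f x))\<^sup>2 \<partial>std_gauss) * Psi f L))"
    using tail_bound_le_explicit[OF L t, of f] by simp
  finally show ?thesis
    by (simp add: algebra_simps)
qed

theorem theorem7: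
  fixes f :: "'a::euclidean_space \<Rightarrow> real"
  assumes diff: "\<And>x. f differentiable (at x)"
    and int_f: "integrable std_gauss f"
    and int_grad: "integrable std_gauss (\<lambda>x. (norm (grad f x))\<^sup>2)"
  shows "(\<forall>\<alpha>>0. \<forall>t>0.
           (\<integral>x. min (exp (\<alpha> * (f x - (\<integral>y. f y \<partial>std_gauss)))) (exp (\<alpha> * t)) \<partial>std_gauss)
             \<le> exp (\<alpha> * t) * (INF L\<in>{0<..}. Delta f L \<alpha> t))
    \<and> (\<forall>t>0.
           measure std_gauss {x. \<bar>f x - (\<integral>y. f y \<partial>std_gauss)\<bar> > t}
             \<le> 2 * (INF p\<in>{0<..} \<times> {0<..}. Delta f (snd p) (fst p) t))
    \<and> (\<forall>L>0. \<forall>t>0.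
           measure std_gauss {x. \<bar>f x - (\<integral>y. f y \<partial>std_gauss)\<bar> > t}
             \<le> 2 * exp (- t\<^sup>2 / (pi\<^sup>2 * L))
                + 2 * (1 + L powr (-1/2)) *
                  sqrt ((1 / L) * (\<integral>x. (norm (grad f x))\<^sup>2 \<partial>std_gauss) * Psi f L))"
proof (intro conjI allI impI)
  fix \<alpha> t :: real
  assume "0 < \<alpha>"
  show "(\<integral>x. min (exp (\<alpha> * (f x - (\<integral>y. f y \<partial>std_gauss)))) (exp (\<alpha> * t)) \<partial>std_gauss)
      \<le> exp (\<alpha> * t) * (INF L\<in>{0<..}. Delta f L \<alpha> t)"
    using integral_min_exp_le_Delta[OF diff int_f int_grad _ \<open>0 < \<alpha>\<close>]
    by (intro le_mult_INF) (simp_all add: gt_ex)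
next
  fix t :: real
  show "measure std_gauss {x. \<bar>f x - (\<integral>y. f y \<partial>std_gauss)\<bar> > t}
      \<le> 2 * (INF p\<in>{0<..} \<times> {0<..}. Delta f (snd p) (fst p) t)"
    using abs_tail_le_Delta[OF diff int_f int_grad]
    by (intro le_mult_INF) (auto simp: gt_ex)
next
  fix L t :: real
  assume "0 < L" "0 < t"
  then show "measure std_gauss {x. \<bar>f x - (\<integral>y. f y \<partial>std_gauss)\<bar> > t}
      \<le> 2 * exp (- t\<^sup>2 / (pi\<^sup>2 * L))
        + 2 * (1 + L powr (-1/2)) * sqrt ((1 / L) * (\<integral>x. (norm (grad f x))\<^sup>2 \<partial>std_gauss) * Psi f L)"
    by (rule abs_tail_le_explicit[OF diff int_f int_grad])
qed

end
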